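(* For every $\gamma\in[0,1]$, the Hybrid Ranking algorithm with threshold $\gamma$ (described in the context) is $\frac{\gamma}{2}$-CEF: on every instance, its (random) output matching $X$ satisfies $\mathbb{E}[V_i(X)]\ge\frac{\gamma}{2}\,\mathbb{E}[V_i^*(y_j(X))]$ for all classes $i,j$.
   Context: Online class matching (indivisible setting): an instance is a bipartite graph $G=(N,M,E)$ with known agents $N$, items $M$, $E\subseteq M\times N$ ($a$ likes $o$ iff $(o,a)\in E$); agents are partitioned into $k$ known classes $N_1,\dots,N_k$. Items arrive one at a time in adversarial order; upon arrival of $o$ its set of liking agents is revealed and $o$ must be irrevocably matched to at most one currently unmatched agent liking it, producing an integral matching $X=(x_{o,a})\in\{0,1\}^{M\times N}$. $V_i(X)=\sum_{a\in N_i}\sum_ox_{o,a}$; $y_j(X)\in\{0,1\}^M$ is the indicator vector of the set of items matched to agents in class $j$. For $y\in[0,1]^M$, $V_i^*(y)$ is the maximum size of a fractional matching using edges of $E$ between $N_i$ and $M$ with degree at most $y_o$ at each item $o$ and at most $1$ at each agent. Hybrid Ranking with threshold $\gamma$: fix an arbitrary ordering of $N$. For each agent $a$ independently sample $\mu_a$ uniformly from $[0,1]$, and let $N'=\{a:\mu_a\le\gamma\}$. On arrival of item $o$: (1) if $o$ is liked by some unmatched agent in $N'$, let $Z$ be the set of classes containing such agents; choose a class $i$ uniformly at random from $Z$ and match $o$ to the unmatched agent of class $i$ in $N'$ liking $o$ that occurs first in the ordering of $N$; (2) otherwise, if $o$ is liked by some unmatched agent in $N\setminus N'$, match $o$ to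 such an agent with the lowest value $\mu_a$; otherwise leave $o$ unmatched. *)

theory Defs
  imports "HOL-Probability.Probability"
begin

text \<open>
  An instance consists of a finite
  agent set N, a finite item set M and edges E (a subset of M x N); the pair (itm, a)
  is in E iff agent a likes item itm. Classes are given by a map cls from agents to
  class indices; class c is the set of agents a in N with cls a = c.
  The fixed arbitrary ordering of N is given by an injective map rk (smaller rk
  means earlier). The adversarial arrival order is a list of the items of M.
\<close>

definition unmatched :: "('i \<times> 'a) set \<Rightarrow> 'a \<Rightarrow> bool" where
  "unmatched X a \<longleftrightarrow> a \<notin> snd ` X"

text \<open>One step of Hybrid Ranking on arrival of item itm, given the sampled values mu
  (the class choice is the only remaining randomness, hence the pmf).\<close>
definition hr_step ::
  "real \<Rightarrow> ('i \<times> 'a) set \<Rightarrow> 'a set \<Rightarrow> ('a \<Rightarrow> nat) \<Rightarrow> ('a \<Rightarrow> nat) \<Rightarrow> ('a \<Rightarrow> real)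
     \<Rightarrow> 'i \<Rightarrow> ('i \<times> 'a) set \<Rightarrow> ('i \<times> 'a) set pmf" where
  "hr_step \<gamma> E N cls rk mu itm X =
    (let C1 = {a \<in> N. mu a \<le> \<gamma> \<and> (itm, a) \<in> E \<and> unmatched X a};
         C2 = {a \<in> N. \<not> mu a \<le> \<gamma> \<and> (itm, a) \<in> E \<and> unmatched X a}
     in if C1 \<noteq> {} then
          map_pmf (\<lambda>c. insert (itm, SOME a. a \<in> C1 \<and> cls a = c \<and>
                                   (\<forall>b \<in> C1. cls b = c \<longrightarrow> rk a \<le> rk b)) X)
                  (pmf_of_set (cls ` C1))
        else if C2 \<noteq> {} then
          return_pmf (insert (itm, SOME a. a \<in> C2 \<and> (\<forall>b \<in> C2. mu a \<le> mu b)) X)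
        else return_pmf X)"

definition hybrid_ranking ::
  "real \<Rightarrow> ('i \<times> 'a) set \<Rightarrow> 'a set \<Rightarrow> ('a \<Rightarrow> nat) \<Rightarrow> ('a \<Rightarrow> nat) \<Rightarrow> ('a \<Rightarrow> real)
     \<Rightarrow> 'i list \<Rightarrow> ('i \<times> 'a) set pmf" where
  "hybrid_ranking \<gamma> E N cls rk mu items =
     foldl (\<lambda>p itm. bind_pmf p (hr_step \<gamma> E N cls rk mu itm)) (return_pmf {}) items"

definition mu_dist :: "'a set \<Rightarrow> ('a \<Rightarrow> real) measure" where
  "mu_dist N = PiM N (\<lambda>_. uniform_measure lborel {0..1})"

definition hr_expect ::
  "real \<Rightarrow> ('i \<times> 'a) set \<Rightarrow> 'a set \<Rightarrow> ('a \<Rightarrow> nat) \<Rightarrow> ('a \<Rightarrow> nat) \<Rightarrow> 'i list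
     \<Rightarrow> (('i \<times> 'a) set \<Rightarrow> real) \<Rightarrow> real" where
  "hr_expect \<gamma> E N cls rk items f =
     (\<integral>mu. measure_pmf.expectation (hybrid_ranking \<gamma> E N cls rk mu items) f \<partial>mu_dist N)"

definition class_value :: "'a set \<Rightarrow> ('a \<Rightarrow> nat) \<Rightarrow> nat \<Rightarrow> ('i \<times> 'a) set \<Rightarrow> real" where
  "class_value N cls i X = real (card {p \<in> X. snd p \<in> N \<and> cls (snd p) = i})"

definition class_items :: "'a set \<Rightarrow> ('a \<Rightarrow> nat) \<Rightarrow> nat \<Rightarrow> ('i \<times> 'a) set \<Rightarrow> 'i \<Rightarrow> real" where
  "class_items N cls j X = (\<lambda>itm. if \<exists>a \<in> N. cls a = j \<and> (itm, a) \<in> X then 1 else 0)"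

definition frac_value ::
  "'i set \<Rightarrow> 'a set \<Rightarrow> ('i \<times> 'a) set \<Rightarrow> ('a \<Rightarrow> nat) \<Rightarrow> nat \<Rightarrow> ('i \<Rightarrow> real) \<Rightarrow> real" where
  "frac_value M N E cls i y =
     Sup {(\<Sum>e \<in> {e \<in> E. snd e \<in> N \<and> cls (snd e) = i}. x e) | x :: 'i \<times> 'a \<Rightarrow> real.
            (\<forall>e. 0 \<le> x e) \<and>
            (\<forall>itm \<in> M. (\<Sum>a \<in> {a \<in> N. cls a = i \<and> (itm, a) \<in> E}. x (itm, a)) \<le> y itm) \<and>
            (\<forall>a \<in> N. cls a = i \<longrightarrow> (\<Sum>itm \<in> {itm \<in> M. (itm, a) \<in> E}. x (itm, a)) \<le> 1)}"

end

theory Submission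
  imports Defs
begin

text \<open>
  Fix the samples mu and call an item contested if, on its arrival, some unmatched agent of
  class i in N' likes it. A fractional matching of class i into the items of class j is then
  bounded by V_i(X), plus the contested items that went to class j, plus the agents of class i
  outside N' that stay unmatched although they like an uncontested item that went to class j.
  A contested item goes to a uniformly random competing class, and class i competes, so in
  expectation class j receives no more contested items than class i, i.e. at most E[V_i].

  An agent a is compared with the run without a. If mu_a > gamma, a can only be passed over when
  that run gives an uncontested item liked by a to class j; if mu_a \<le> gamma, the probability of
  the latter is at most twice the probability that a is matched. The run without a ignores mu_a, and for
  mu_a \<le> gamma so does the run with a; integrating over mu_a yields the weights 1 - gamma and
  gamma, which combine to gamma E[V_i^*(y_j)] \<le> 2 E[V_i].
\<close>

section \<open>Finite expectations and averages\<close>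

lemma expectation_bind_pmf_finite:
  fixes h :: "'b \<Rightarrow> real"
  assumes "finite (set_pmf p)" "\<And>x. x \<in> set_pmf p \<Longrightarrow> finite (set_pmf (f x))"
  shows "measure_pmf.expectation (p \<bind> f) h
           = measure_pmf.expectation p (\<lambda>x. measure_pmf.expectation (f x) h)"
  using assms
  by (simp add: pmf_expectation_bind[of "set_pmf p"] integral_measure_pmf_real[of "set_pmf p"]
      mult.commute)

lemma expectation_cong_pmf:
  fixes f g :: "'b \<Rightarrow> real"
  assumes "\<And>x. x \<in> set_pmf p \<Longrightarrow> f x = g x"
  shows "measure_pmf.expectation p f = measure_pmf.expectation p g"
  using assms by (intro integral_cong_AE) (auto simp: AE_measure_pmf_iff)

lemma expectation_mono_finite:
  fixes f g :: "'b \<Rightarrow> real"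
  assumes "finite (set_pmf p)" "\<And>x. x \<in> set_pmf p \<Longrightarrow> f x \<le> g x"
  shows "measure_pmf.expectation p f \<le> measure_pmf.expectation p g"
  using assms by (intro integral_mono_AE integrable_measure_pmf_finite AE_pmfI) auto

lemma expectation_nonneg_pmf:
  fixes f :: "'b \<Rightarrow> real"
  assumes "\<And>x. x \<in> set_pmf p \<Longrightarrow> 0 \<le> f x"
  shows "0 \<le> measure_pmf.expectation p f"
  using assms by (intro integral_nonneg_AE AE_pmfI) auto

lemma expectation_le_const_finite:
  fixes f :: "'b \<Rightarrow> real"
  assumes "finite (set_pmf p)" "\<And>x. x \<in> set_pmf p \<Longrightarrow> f x \<le> c"
  shows "measure_pmf.expectation p f \<le> c"
  using expectation_mono_finite[of p f "\<lambda>_. c"] assms by simp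

lemma ex_arg_min_finite:
  fixes f :: "'a \<Rightarrow> 'b :: linorder"
  assumes "finite S" "S \<noteq> {}"
  shows "\<exists>a \<in> S. \<forall>b \<in> S. f a \<le> f b"
  using assms by (intro bexI[of _ "arg_min_on f S"]) (auto intro: arg_min_if_finite arg_min_least)

lemma sum_indicator_eq_card:
  "finite A \<Longrightarrow> (\<Sum>a\<in>A. if P a then 1 else 0 :: real) = real (card {a \<in> A. P a})"
  by (simp add: sum.inter_filter[symmetric])

lemma average_le_of_sum_nonpos:
  fixes d :: "nat \<Rightarrow> real"
  assumes "finite Z" "Z \<noteq> {}" "(\<Sum>c \<in> Z. d c) \<le> 0"
  shows "(\<Sum>c \<in> Z. base + d c) / real (card Z) \<le> base"
proof -
  have "card Z > 0" using assms by (simp add: card_gt_0_iff)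
  then have "(\<Sum>c \<in> Z. base + d c) / real (card Z) = base + (\<Sum>c \<in> Z. d c) / real (card Z)"
    by (simp add: sum.distrib field_simps)
  also have "\<dots> \<le> base" using assms(3) \<open>card Z > 0\<close> by (simp add: divide_nonpos_pos)
  finally show ?thesis .
qed

lemma sum_indicator_diff_nonpos:
  fixes Z :: "nat set"
  assumes "finite Z" "P \<Longrightarrow> i \<in> Z"
  shows "(\<Sum>c \<in> Z. (if P \<and> c = j then 1 else 0) - (if c = i then 1 else 0 :: real)) \<le> 0"
proof -
  have "(\<Sum>c \<in> Z. (if P \<and> c = j then 1 else 0) - (if c = i then 1 else 0 :: real))
      = (\<Sum>c \<in> Z. if c = j then (if P then 1 else 0) else 0) - (\<Sum>c \<in> Z. if c = i then 1 else 0)"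
    by (subst sum_subtractf[symmetric]) (rule sum.cong; auto)
  also have "\<dots> = (if j \<in> Z \<and> P then 1 else 0) - (if i \<in> Z then 1 else 0)"
    using assms(1) by (simp add: sum.delta)
  also have "\<dots> \<le> 0" using assms(2) by simp
  finally show ?thesis .
qed

section \<open>Matchings and fractional matchings\<close>

definition matching :: "('i \<times> 'a) set \<Rightarrow> bool" where
  "matching X \<longleftrightarrow> (\<forall>p \<in> X. \<forall>q \<in> X. fst p = fst q \<longleftrightarrow> snd p = snd q)"

lemma class_value_matching:
  assumes "matching X" "finite X" "snd ` X \<subseteq> N"
  shows "class_value N cls i X = real (card {a \<in> N. cls a = i \<and> \<not> unmatched X a})"
proof -
  let ?P = "{p \<in> X. snd p \<in> N \<and> cls (snd p) = i}"
  have "inj_on snd ?P"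
  proof (rule inj_onI)
    fix p q assume "p \<in> ?P" "q \<in> ?P" "snd p = snd q"
    then have "fst p = fst q" using assms(1) unfolding matching_def by blast
    then show "p = q" using \<open>snd p = snd q\<close> by (rule prod_eqI)
  qed
  moreover have "snd ` ?P = {a \<in> N. cls a = i \<and> \<not> unmatched X a}"
    using assms(3) by (auto simp: unmatched_def)
  ultimately show ?thesis
    unfolding class_value_def by (simp add: card_image[symmetric])
qed

lemma class_items_insert:
  assumes "itm \<notin> fst ` X" "b \<in> N"
  shows "class_items N cls j (insert (itm, b) X) ob =
           (if ob = itm then (if cls b = j then 1 else 0) else class_items N cls j X ob)"
  using assms by (auto simp: class_items_def image_iff)

lemma class_value_insert:
  assumes "(itm, b) \<notin> X" "finite X" "b \<in> N"
  shows "class_value N cls i (insert (itm, b) X) = class_value N cls i X + (if cls b = i then 1 else 0)"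
proof (cases "cls b = i")
  case True
  then have "{p \<in> insert (itm, b) X. snd p \<in> N \<and> cls (snd p) = i}
           = insert (itm, b) {p \<in> X. snd p \<in> N \<and> cls (snd p) = i}"
    using assms(3) by auto
  then show ?thesis using assms True by (simp add: class_value_def)
next
  case False
  then have "{p \<in> insert (itm, b) X. snd p \<in> N \<and> cls (snd p) = i}
           = {p \<in> X. snd p \<in> N \<and> cls (snd p) = i}"
    by auto
  then show ?thesis using False by (simp add: class_value_def)
qed

lemma sum_class_edges:
  fixes M :: "'i set" and N :: "'a set" and E :: "('i \<times> 'a) set"
  assumes "finite M" "finite N" "E \<subseteq> M \<times> N"
  shows "(\<Sum>e \<in> {e \<in> E. snd e \<in> N \<and> cls (snd e) = i}. x e)
       = (\<Sum>a \<in> {a \<in> N. cls a = i}. \<Sum>itm \<in> {itm \<in> M. (itm, a) \<in> E}. x (itm, a))"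
proof -
  have "{e \<in> E. snd e \<in> N \<and> cls (snd e) = i}
      = prod.swap ` (SIGMA a:{a \<in> N. cls a = i}. {itm \<in> M. (itm, a) \<in> E})"
    using assms(3) by force
  then show ?thesis using assms(1,2)
    by (simp, subst sum.reindex) (auto simp: sum.Sigma case_prod_beta prod.swap_def)
qed

lemma frac_value_le:
  fixes M :: "'i set" and N :: "'a set" and E :: "('i \<times> 'a) set"
  assumes "\<And>itm. 0 \<le> y itm"
    and "\<And>x. \<forall>e. 0 \<le> x e \<Longrightarrow>
           \<forall>itm \<in> M. (\<Sum>a \<in> {a \<in> N. cls a = i \<and> (itm, a) \<in> E}. x (itm, a)) \<le> y itm \<Longrightarrow>
           \<forall>a \<in> N. cls a = i \<longrightarrow> (\<Sum>itm \<in> {itm \<in> M. (itm, a) \<in> E}. x (itm, a)) \<le> 1 \<Longrightarrow>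
           (\<Sum>e \<in> {e \<in> E. snd e \<in> N \<and> cls (snd e) = i}. x e) \<le> c"
  shows "frac_value M N E cls i y \<le> c"
  unfolding frac_value_def
proof (rule cSup_least)
  show "{(\<Sum>e \<in> {e \<in> E. snd e \<in> N \<and> cls (snd e) = i}. x e) | x :: 'i \<times> 'a \<Rightarrow> real.
          (\<forall>e. 0 \<le> x e) \<and>
          (\<forall>itm \<in> M. (\<Sum>a \<in> {a \<in> N. cls a = i \<and> (itm, a) \<in> E}. x (itm, a)) \<le> y itm) \<and>
          (\<forall>a \<in> N. cls a = i \<longrightarrow> (\<Sum>itm \<in> {itm \<in> M. (itm, a) \<in> E}. x (itm, a)) \<le> 1)} \<noteq> {}"
    using assms(1) by (auto intro!: exI[of _ "\<lambda>_. 0"])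
qed (use assms(2) in blast)

lemma feasible_sum_le_card:
  fixes M :: "'i set" and N :: "'a set" and E :: "('i \<times> 'a) set"
  assumes "finite M" "finite N" "E \<subseteq> M \<times> N"
    and "\<forall>a \<in> N. cls a = i \<longrightarrow> (\<Sum>itm \<in> {itm \<in> M. (itm, a) \<in> E}. x (itm, a)) \<le> 1"
  shows "(\<Sum>e \<in> {e \<in> E. snd e \<in> N \<and> cls (snd e) = i}. x e) \<le> real (card N)"
proof -
  have "(\<Sum>e \<in> {e \<in> E. snd e \<in> N \<and> cls (snd e) = i}. x e)
      = (\<Sum>a \<in> {a \<in> N. cls a = i}. \<Sum>itm \<in> {itm \<in> M. (itm, a) \<in> E}. x (itm, a))"
    using assms(1-3) by (rule sum_class_edges)
  also have "\<dots> \<le> (\<Sum>a \<in> {a \<in> N. cls a = i}. 1)" using assms(4) by (intro sum_mono) auto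
  also have "\<dots> \<le> real (card N)" using assms(2) by (simp add: card_mono)
  finally show ?thesis .
qed

lemma frac_value_bounds:
  fixes M :: "'i set" and N :: "'a set" and E :: "('i \<times> 'a) set"
  assumes "finite M" "finite N" "E \<subseteq> M \<times> N" "\<And>itm. 0 \<le> y itm"
  shows "0 \<le> frac_value M N E cls i y" "frac_value M N E cls i y \<le> real (card N)"
proof -
  let ?S = "{(\<Sum>e \<in> {e \<in> E. snd e \<in> N \<and> cls (snd e) = i}. x e) | x :: 'i \<times> 'a \<Rightarrow> real.
          (\<forall>e. 0 \<le> x e) \<and>
          (\<forall>itm \<in> M. (\<Sum>a \<in> {a \<in> N. cls a = i \<and> (itm, a) \<in> E}. x (itm, a)) \<le> y itm) \<and>
          (\<forall>a \<in> N. cls a = i \<longrightarrow> (\<Sum>itm \<in> {itm \<in> M. (itm, a) \<in> E}. x (itm, a)) \<le> 1)}"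
  have bdd: "bdd_above ?S"
    using feasible_sum_le_card[OF assms(1-3), of cls i] by (intro bdd_aboveI) blast
  have "0 \<in> ?S" using assms(4) by (auto intro!: exI[of _ "\<lambda>_. 0"])
  from cSup_upper2[OF this order_refl bdd] show "0 \<le> frac_value M N E cls i y"
    unfolding frac_value_def .
  show "frac_value M N E cls i y \<le> real (card N)"
    using assms(4) feasible_sum_le_card[OF assms(1-3)] by (intro frac_value_le)
qed

section \<open>Hybrid Ranking run item by item\<close>

locale hr_setting =
  fixes \<gamma> :: real and E :: "('i \<times> 'a) set" and cls :: "'a \<Rightarrow> nat" and rk :: "'a \<Rightarrow> nat"
    and i j :: nat
begin

text \<open>The agents with sample at most \<gamma> form the set N' of the algorithm; low_cands and
  high_cands are the unmatched agents inside and outside N' that like the arriving item.\<close>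

definition low_cands :: "'a set \<Rightarrow> ('a \<Rightarrow> real) \<Rightarrow> 'i \<Rightarrow> ('i \<times> 'a) set \<Rightarrow> 'a set" where
  "low_cands N mu itm X = {a \<in> N. mu a \<le> \<gamma> \<and> (itm, a) \<in> E \<and> unmatched X a}"

definition high_cands :: "'a set \<Rightarrow> ('a \<Rightarrow> real) \<Rightarrow> 'i \<Rightarrow> ('i \<times> 'a) set \<Rightarrow> 'a set" where
  "high_cands N mu itm X = {a \<in> N. \<not> mu a \<le> \<gamma> \<and> (itm, a) \<in> E \<and> unmatched X a}"

definition first_of_class :: "'a set \<Rightarrow> nat \<Rightarrow> 'a" where
  "first_of_class C c = (SOME a. a \<in> C \<and> cls a = c \<and> (\<forall>b \<in> C. cls b = c \<longrightarrow> rk a \<le> rk b))"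

definition lowest_mu :: "'a set \<Rightarrow> ('a \<Rightarrow> real) \<Rightarrow> 'a" where
  "lowest_mu C mu = (SOME a. a \<in> C \<and> (\<forall>b \<in> C. mu a \<le> mu b))"

lemma hr_step_eq:
  "hr_step \<gamma> E N cls rk mu itm X =
    (if low_cands N mu itm X \<noteq> {} then
       map_pmf (\<lambda>c. insert (itm, first_of_class (low_cands N mu itm X) c) X)
         (pmf_of_set (cls ` low_cands N mu itm X))
     else if high_cands N mu itm X \<noteq> {} then
       return_pmf (insert (itm, lowest_mu (high_cands N mu itm X) mu) X)
     else return_pmf X)"
  unfolding hr_step_def low_cands_def high_cands_def first_of_class_def lowest_mu_def Let_def
  by simp

lemma finite_low_cands [simp]: "finite N \<Longrightarrow> finite (low_cands N mu itm X)"
  by (simp add: low_cands_def)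

lemma finite_high_cands [simp]: "finite N \<Longrightarrow> finite (high_cands N mu itm X)"
  by (simp add: high_cands_def)

lemma first_of_class_spec:
  assumes "finite C" "c \<in> cls ` C"
  shows "first_of_class C c \<in> C" "cls (first_of_class C c) = c"
    "\<And>b. b \<in> C \<Longrightarrow> cls b = c \<Longrightarrow> rk (first_of_class C c) \<le> rk b"
proof -
  let ?D = "{a \<in> C. cls a = c}"
  have "finite ?D" "?D \<noteq> {}" using assms by auto
  then obtain a where "a \<in> ?D" "\<forall>b \<in> ?D. rk a \<le> rk b"
    using ex_arg_min_finite by blast
  then have "\<exists>a. a \<in> C \<and> cls a = c \<and> (\<forall>b \<in> C. cls b = c \<longrightarrow> rk a \<le> rk b)" by auto
  then have "first_of_class C c \<in> C \<and> cls (first_of_class C c) = c \<and>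
      (\<forall>b \<in> C. cls b = c \<longrightarrow> rk (first_of_class C c) \<le> rk b)"
    unfolding first_of_class_def by (rule someI_ex)
  then show "first_of_class C c \<in> C" "cls (first_of_class C c) = c"
    "\<And>b. b \<in> C \<Longrightarrow> cls b = c \<Longrightarrow> rk (first_of_class C c) \<le> rk b"
    by auto
qed

lemma lowest_mu_spec:
  assumes "finite C" "C \<noteq> {}"
  shows "lowest_mu C mu \<in> C" "\<And>b. b \<in> C \<Longrightarrow> mu (lowest_mu C mu) \<le> mu b"
proof -
  obtain a where "a \<in> C" "\<forall>b \<in> C. mu a \<le> mu b"
    using ex_arg_min_finite[OF assms] by blast
  then have "\<exists>a. a \<in> C \<and> (\<forall>b \<in> C. mu a \<le> mu b)" by auto
  then have "lowest_mu C mu \<in> C \<and> (\<forall>b \<in> C. mu (lowest_mu C mu) \<le> mu b)"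
    unfolding lowest_mu_def by (rule someI_ex)
  then show "lowest_mu C mu \<in> C" "\<And>b. b \<in> C \<Longrightarrow> mu (lowest_mu C mu) \<le> mu b" by auto
qed

lemma finite_set_hr_step: "finite N \<Longrightarrow> finite (set_pmf (hr_step \<gamma> E N cls rk mu itm X))"
  by (auto simp: hr_step_eq)

lemma expectation_hr_step:
  fixes h :: "('i \<times> 'a) set \<Rightarrow> real"
  assumes "finite N"
  shows "measure_pmf.expectation (hr_step \<gamma> E N cls rk mu itm X) h =
    (if low_cands N mu itm X \<noteq> {} then
       (\<Sum>c \<in> cls ` low_cands N mu itm X. h (insert (itm, first_of_class (low_cands N mu itm X) c) X))
         / card (cls ` low_cands N mu itm X)
     else if high_cands N mu itm X \<noteq> {} then h (insert (itm, lowest_mu (high_cands N mu itm X) mu) X)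
     else h X)"
  using assms by (simp add: hr_step_eq integral_pmf_of_set)

lemma hr_step_cases:
  assumes "X' \<in> set_pmf (hr_step \<gamma> E N cls rk mu itm X)" "finite N"
  obtains "X' = X" | b where "b \<in> N" "(itm, b) \<in> E" "unmatched X b" "X' = insert (itm, b) X"
proof -
  consider (low) "low_cands N mu itm X \<noteq> {}"
    | (high) "low_cands N mu itm X = {}" "high_cands N mu itm X \<noteq> {}"
    | (none) "low_cands N mu itm X = {}" "high_cands N mu itm X = {}"
    by blast
  then show thesis
  proof cases
    case low
    then obtain c where c: "c \<in> cls ` low_cands N mu itm X"
      "X' = insert (itm, first_of_class (low_cands N mu itm X) c) X"
      using assms by (auto simp: hr_step_eq)
    then show ?thesis
      using that first_of_class_spec(1)[OF finite_low_cands[OF assms(2)] c(1)]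
      by (auto simp: low_cands_def)
  next
    case high
    then show ?thesis
      using assms that lowest_mu_spec(1)[OF finite_high_cands[OF assms(2)] high(2), of mu]
      by (auto simp: hr_step_eq high_cands_def)
  next
    case none
    then show ?thesis using assms that by (auto simp: hr_step_eq)
  qed
qed

fun hr_run :: "'a set \<Rightarrow> ('a \<Rightarrow> real) \<Rightarrow> ('i \<times> 'a) set \<Rightarrow> 'i list \<Rightarrow> ('i \<times> 'a) set pmf" where
  "hr_run N mu X [] = return_pmf X"
| "hr_run N mu X (itm # os) = hr_step \<gamma> E N cls rk mu itm X \<bind> (\<lambda>X'. hr_run N mu X' os)"

lemma hybrid_ranking_eq_hr_run: "hybrid_ranking \<gamma> E N cls rk mu items = hr_run N mu {} items"
proof -
  have "foldl (\<lambda>p itm. p \<bind> hr_step \<gamma> E N cls rk mu itm) p os = p \<bind> (\<lambda>X. hr_run N mu X os)"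
    for p os
    by (induction os arbitrary: p) (simp_all add: bind_return_pmf' bind_assoc_pmf)
  then show ?thesis unfolding hybrid_ranking_def by (simp add: bind_return_pmf)
qed

lemma finite_set_hr_run: "finite N \<Longrightarrow> finite (set_pmf (hr_run N mu X os))"
  by (induction os arbitrary: X) (simp_all add: finite_set_hr_step)

lemma expectation_hr_run_Cons:
  fixes h :: "('i \<times> 'a) set \<Rightarrow> real"
  assumes "finite N"
  shows "measure_pmf.expectation (hr_run N mu X (itm # os)) h =
     measure_pmf.expectation (hr_step \<gamma> E N cls rk mu itm X)
       (\<lambda>X'. measure_pmf.expectation (hr_run N mu X' os) h)"
  using assms by (simp add: expectation_bind_pmf_finite finite_set_hr_step finite_set_hr_run)

lemma hr_run_mono:
  assumes "X' \<in> set_pmf (hr_run N mu X os)" "finite N"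
  shows "X \<subseteq> X'"
  using assms
proof (induction os arbitrary: X)
  case (Cons itm os)
  then obtain X1 where "X1 \<in> set_pmf (hr_step \<gamma> E N cls rk mu itm X)" "X' \<in> set_pmf (hr_run N mu X1 os)"
    by auto
  then show ?case using Cons by (elim hr_step_cases) auto
qed simp

section \<open>Contested and uncontested items\<close>

type_synonym ('item, 'agent) tracked = "('item \<times> 'agent) set \<times> 'item set \<times> 'item set"

abbreviation contested :: "('item, 'agent) tracked \<Rightarrow> 'item set" where
  "contested S \<equiv> fst (snd S)"

abbreviation uncontested :: "('item, 'agent) tracked \<Rightarrow> 'item set" where
  "uncontested S \<equiv> snd (snd S)"

definition class_competes :: "'a set \<Rightarrow> ('a \<Rightarrow> real) \<Rightarrow> 'i \<Rightarrow> ('i \<times> 'a) set \<Rightarrow> bool" where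
  "class_competes N mu itm X \<longleftrightarrow> i \<in> cls ` low_cands N mu itm X"

definition tracked_update ::
  "'a set \<Rightarrow> ('a \<Rightarrow> real) \<Rightarrow> 'i \<Rightarrow> ('i, 'a) tracked \<Rightarrow> ('i \<times> 'a) set \<Rightarrow> ('i, 'a) tracked" where
  "tracked_update N mu itm S X' =
     (if class_competes N mu itm (fst S) then (X', insert itm (contested S), uncontested S)
      else (X', contested S, insert itm (uncontested S)))"

definition tracked_step :: "'a set \<Rightarrow> ('a \<Rightarrow> real) \<Rightarrow> 'i \<Rightarrow> ('i, 'a) tracked \<Rightarrow> ('i, 'a) tracked pmf" where
  "tracked_step N mu itm S = map_pmf (tracked_update N mu itm S) (hr_step \<gamma> E N cls rk mu itm (fst S))"

fun tracked_run :: "'a set \<Rightarrow> ('a \<Rightarrow> real) \<Rightarrow> ('i, 'a) tracked \<Rightarrow> 'i list \<Rightarrow> ('i, 'a) tracked pmf" where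
  "tracked_run N mu S [] = return_pmf S"
| "tracked_run N mu S (itm # os) = tracked_step N mu itm S \<bind> (\<lambda>S'. tracked_run N mu S' os)"

lemma fst_tracked_update [simp]: "fst (tracked_update N mu itm S X') = X'"
  by (simp add: tracked_update_def)

lemma map_fst_tracked_run: "map_pmf fst (tracked_run N mu S os) = hr_run N mu (fst S) os"
  by (induction os arbitrary: S) (simp_all add: map_bind_pmf tracked_step_def bind_map_pmf)

lemma finite_set_tracked_step: "finite N \<Longrightarrow> finite (set_pmf (tracked_step N mu itm S))"
  by (simp add: tracked_step_def finite_set_hr_step)

lemma finite_set_tracked_run: "finite N \<Longrightarrow> finite (set_pmf (tracked_run N mu S os))"
  by (induction os arbitrary: S) (simp_all add: finite_set_tracked_step)

lemma expectation_tracked_step: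
  fixes h :: "('i, 'a) tracked \<Rightarrow> real"
  shows "measure_pmf.expectation (tracked_step N mu itm S) h =
     measure_pmf.expectation (hr_step \<gamma> E N cls rk mu itm (fst S)) (\<lambda>X'. h (tracked_update N mu itm S X'))"
  by (simp add: tracked_step_def)

lemma expectation_tracked_run_Cons:
  fixes h :: "('i, 'a) tracked \<Rightarrow> real"
  assumes "finite N"
  shows "measure_pmf.expectation (tracked_run N mu S (itm # os)) h =
     measure_pmf.expectation (tracked_step N mu itm S)
       (\<lambda>S'. measure_pmf.expectation (tracked_run N mu S' os) h)"
  using assms by (simp add: expectation_bind_pmf_finite finite_set_tracked_step finite_set_tracked_run)

lemma expectation_hybrid_ranking_tracked:
  fixes f :: "('i \<times> 'a) set \<Rightarrow> real"
  shows "measure_pmf.expectation (hybrid_ranking \<gamma> E N cls rk mu items) f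
       = measure_pmf.expectation (tracked_run N mu ({}, {}, {}) items) (\<lambda>S. f (fst S))"
  using map_fst_tracked_run[of N mu "({}, {}, {})" items]
  by (simp add: hybrid_ranking_eq_hr_run flip: integral_map_pmf)

lemma tracked_run_mono:
  assumes "S' \<in> set_pmf (tracked_run N mu S os)" "finite N"
  shows "fst S \<subseteq> fst S'"
proof -
  have "fst S' \<in> set_pmf (hr_run N mu (fst S) os)"
    using assms(1) by (metis map_fst_tracked_run pmf.set_map imageI)
  then show ?thesis using hr_run_mono assms(2) by blast
qed

definition tracked_inv :: "'a set \<Rightarrow> ('a \<Rightarrow> real) \<Rightarrow> 'i set \<Rightarrow> ('i, 'a) tracked \<Rightarrow> bool" where
  "tracked_inv N mu D S \<longleftrightarrow>
     finite (fst S) \<and> fst S \<subseteq> E \<and> snd ` fst S \<subseteq> N \<and> fst ` fst S \<subseteq> D \<and> matching (fst S)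
     \<and> contested S \<union> uncontested S = D
     \<and> (\<forall>ob \<in> uncontested S. \<forall>b \<in> N. mu b \<le> \<gamma> \<and> cls b = i \<and> (ob, b) \<in> E \<longrightarrow> \<not> unmatched (fst S) b)"

lemma tracked_inv_step:
  assumes inv: "tracked_inv N mu D S" and "itm \<notin> D" "finite N"
    and "S' \<in> set_pmf (tracked_step N mu itm S)"
  shows "tracked_inv N mu (insert itm D) S'"
proof -
  obtain X T Q where S: "S = (X, T, Q)" by (cases S) auto
  from assms(4) obtain X' where X': "X' \<in> set_pmf (hr_step \<gamma> E N cls rk mu itm X)"
    and S': "S' = tracked_update N mu itm S X'" by (auto simp: tracked_step_def S)
  have "X \<subseteq> X'" using X' assms(3) by (elim hr_step_cases) auto
  then have stay: "\<not> unmatched X b \<Longrightarrow> \<not> unmatched X' b" for b by (auto simp: unmatched_def)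
  have X'_inv: "finite X' \<and> X' \<subseteq> E \<and> snd ` X' \<subseteq> N \<and> fst ` X' \<subseteq> insert itm D \<and> matching X'"
    using X' assms(3) inv assms(2) unfolding S tracked_inv_def
    by (elim hr_step_cases) (auto simp: matching_def unmatched_def image_iff)
  show ?thesis
  proof (cases "class_competes N mu itm X")
    case True
    then show ?thesis using X'_inv inv stay unfolding S' S tracked_inv_def tracked_update_def by auto
  next
    case False
    then have "\<forall>b \<in> N. mu b \<le> \<gamma> \<and> cls b = i \<and> (itm, b) \<in> E \<longrightarrow> \<not> unmatched X b"
      by (auto simp: class_competes_def low_cands_def)
    then show ?thesis
      using X'_inv inv stay False unfolding S' S tracked_inv_def tracked_update_def by auto
  qed
qed

lemma tracked_inv_run:
  assumes "tracked_inv N mu D S" "distinct os" "set os \<inter> D = {}" "finite N"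
    "S' \<in> set_pmf (tracked_run N mu S os)"
  shows "tracked_inv N mu (D \<union> set os) S'"
  using assms
proof (induction os arbitrary: S D)
  case (Cons itm os)
  from Cons.prems(5) obtain S1 where S1: "S1 \<in> set_pmf (tracked_step N mu itm S)"
    "S' \<in> set_pmf (tracked_run N mu S1 os)" by auto
  have "tracked_inv N mu (insert itm D) S1"
    using tracked_inv_step[OF Cons.prems(1) _ Cons.prems(4) S1(1)] Cons.prems(3) by auto
  from Cons.IH[OF this _ _ Cons.prems(4) S1(2)] Cons.prems(2,3) show ?case by auto
qed simp

lemma tracked_inv_final:
  assumes "finite N" "distinct items" "S \<in> set_pmf (tracked_run N mu ({}, {}, {}) items)"
  shows "tracked_inv N mu (set items) S"
  using tracked_inv_run[of N mu "{}" "({}, {}, {})", OF _ assms(2) _ assms(1,3)]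
  by (simp add: tracked_inv_def matching_def)

definition uncontested_to_j :: "'a set \<Rightarrow> 'a \<Rightarrow> ('i, 'a) tracked \<Rightarrow> bool" where
  "uncontested_to_j N a S \<longleftrightarrow>
     (\<exists>ob \<in> uncontested S. (ob, a) \<in> E \<and> class_items N cls j (fst S) ob = 1)"

definition passed_over :: "'a set \<Rightarrow> ('a \<Rightarrow> real) \<Rightarrow> 'a \<Rightarrow> ('i, 'a) tracked \<Rightarrow> bool" where
  "passed_over N mu a S \<longleftrightarrow> \<not> mu a \<le> \<gamma> \<and> unmatched (fst S) a \<and> uncontested_to_j N a S"

definition contested_to_j :: "'a set \<Rightarrow> ('i, 'a) tracked \<Rightarrow> real" where
  "contested_to_j N S = real (card {ob \<in> contested S. class_items N cls j (fst S) ob = 1})"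

lemma class_items_01: "class_items N cls j X itm = 0 \<or> class_items N cls j X itm = 1"
  by (simp add: class_items_def)

lemma agent_load_le:
  fixes M :: "'i set"
  assumes inv: "tracked_inv N mu M S" and "finite M" "finite N" "a \<in> N" "cls a = i"
    and x0: "\<forall>e. 0 \<le> x e"
    and x_item: "\<forall>itm \<in> M. (\<Sum>b \<in> {b \<in> N. cls b = i \<and> (itm, b) \<in> E}. x (itm, b))
                             \<le> class_items N cls j (fst S) itm"
    and x_agent: "(\<Sum>itm \<in> {itm \<in> M. (itm, a) \<in> E}. x (itm, a)) \<le> 1"
  shows "(\<Sum>itm \<in> {itm \<in> M. (itm, a) \<in> E}. x (itm, a))
         \<le> (if unmatched (fst S) a then 0 else 1) + (if passed_over N mu a S then 1 else 0)
           + (\<Sum>itm \<in> {itm \<in> contested S. (itm, a) \<in> E}. x (itm, a))"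
proof -
  let ?Ma = "{itm \<in> M. (itm, a) \<in> E}"
  have M_split: "contested S \<union> uncontested S = M"
    and uncontested_inv: "\<forall>ob \<in> uncontested S. \<forall>b \<in> N.
      mu b \<le> \<gamma> \<and> cls b = i \<and> (ob, b) \<in> E \<longrightarrow> \<not> unmatched (fst S) b"
    using inv by (auto simp: tracked_inv_def)
  have contested_part: "0 \<le> (\<Sum>itm \<in> {itm \<in> contested S. (itm, a) \<in> E}. x (itm, a))"
    using x0 by (simp add: sum_nonneg)
  show ?thesis
  proof (cases "\<not> unmatched (fst S) a \<or> passed_over N mu a S")
    case True
    then have "1 \<le> (if unmatched (fst S) a then 0 else 1) + (if passed_over N mu a S then 1 else 0 :: real)"
      by auto
    then show ?thesis using x_agent contested_part by linarith
  next
    case False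
    have "x (itm, a) = 0" if itm: "itm \<in> ?Ma - contested S" for itm
    proof -
      have "itm \<in> uncontested S" using itm M_split by auto
      then have "\<not> mu a \<le> \<gamma>" using uncontested_inv assms(4,5) itm False by auto
      then have "class_items N cls j (fst S) itm \<noteq> 1"
        using False itm \<open>itm \<in> uncontested S\<close> by (auto simp: passed_over_def uncontested_to_j_def)
      then have y0: "class_items N cls j (fst S) itm = 0"
        using class_items_01[of N "fst S" itm] by blast
      have "x (itm, a) \<le> (\<Sum>b \<in> {b \<in> N. cls b = i \<and> (itm, b) \<in> E}. x (itm, b))"
        using assms(3-5) itm x0 by (intro member_le_sum) auto
      also have "\<dots> \<le> 0" using x_item itm y0 by auto
      finally show ?thesis using x0 by (meson order_antisym)
    qed
    then have "(\<Sum>itm \<in> ?Ma - contested S. x (itm, a)) = 0" by (intro sum.neutral) blast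
    moreover have "(\<Sum>itm \<in> ?Ma. x (itm, a))
        = (\<Sum>itm \<in> ?Ma \<inter> contested S. x (itm, a)) + (\<Sum>itm \<in> ?Ma - contested S. x (itm, a))"
      using \<open>finite M\<close> by (intro sum.Int_Diff) simp
    moreover have "?Ma \<inter> contested S = {itm \<in> contested S. (itm, a) \<in> E}" using M_split by auto
    ultimately show ?thesis using False by simp
  qed
qed

lemma contested_load_le:
  fixes M :: "'i set"
  assumes inv: "tracked_inv N mu M S" and "finite M" "finite N"
    and x_item: "\<forall>itm \<in> M. (\<Sum>b \<in> {b \<in> N. cls b = i \<and> (itm, b) \<in> E}. x (itm, b))
                             \<le> class_items N cls j (fst S) itm"
  shows "(\<Sum>a \<in> {a \<in> N. cls a = i}. \<Sum>itm \<in> {itm \<in> contested S. (itm, a) \<in> E}. x (itm, a))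
         \<le> contested_to_j N S"
proof -
  have TM: "contested S \<subseteq> M" using inv by (auto simp: tracked_inv_def)
  then have fT: "finite (contested S)" using assms(2) finite_subset by blast
  have "(\<Sum>a \<in> {a \<in> N. cls a = i}. \<Sum>itm \<in> {itm \<in> contested S. (itm, a) \<in> E}. x (itm, a))
      = (\<Sum>itm \<in> contested S. \<Sum>a \<in> {a \<in> N. cls a = i \<and> (itm, a) \<in> E}. x (itm, a))"
    using assms(3) fT by (subst sum.swap_restrict) (auto intro!: sum.cong)
  also have "\<dots> \<le> (\<Sum>itm \<in> contested S. class_items N cls j (fst S) itm)"
    using x_item TM by (intro sum_mono) auto
  also have "\<dots> = (\<Sum>itm \<in> contested S. if class_items N cls j (fst S) itm = 1 then 1 else 0)"
    using class_items_01[of N "fst S"] by (intro sum.cong) auto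
  also have "\<dots> = contested_to_j N S"
    unfolding contested_to_j_def using fT by (rule sum_indicator_eq_card)
  finally show ?thesis .
qed

lemma frac_value_le_tracked:
  fixes M :: "'i set"
  assumes inv: "tracked_inv N mu M S" and "finite M" "finite N" "E \<subseteq> M \<times> N"
  shows "frac_value M N E cls i (class_items N cls j (fst S))
         \<le> class_value N cls i (fst S) + contested_to_j N S
           + real (card {a \<in> N. cls a = i \<and> passed_over N mu a S})"
proof (rule frac_value_le)
  fix x :: "'i \<times> 'a \<Rightarrow> real"
  assume x0: "\<forall>e. 0 \<le> x e"
    and x_item: "\<forall>itm \<in> M. (\<Sum>a \<in> {a \<in> N. cls a = i \<and> (itm, a) \<in> E}. x (itm, a))
                             \<le> class_items N cls j (fst S) itm"
    and x_agent: "\<forall>a \<in> N. cls a = i \<longrightarrow> (\<Sum>itm \<in> {itm \<in> M. (itm, a) \<in> E}. x (itm, a)) \<le> 1"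
  let ?Ni = "{a \<in> N. cls a = i}"
  let ?m = "\<lambda>a. if unmatched (fst S) a then 0 else 1 :: real"
  let ?p = "\<lambda>a. if passed_over N mu a S then 1 else 0 :: real"
  let ?c = "\<lambda>a. \<Sum>itm \<in> {itm \<in> contested S. (itm, a) \<in> E}. x (itm, a)"
  have fX: "finite (fst S)" "snd ` fst S \<subseteq> N" "matching (fst S)"
    using inv by (auto simp: tracked_inv_def)
  have "(\<Sum>e \<in> {e \<in> E. snd e \<in> N \<and> cls (snd e) = i}. x e)
      = (\<Sum>a \<in> ?Ni. \<Sum>itm \<in> {itm \<in> M. (itm, a) \<in> E}. x (itm, a))"
    using assms(2-4) by (rule sum_class_edges)
  also have "\<dots> \<le> (\<Sum>a \<in> ?Ni. ?m a + ?p a + ?c a)"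
    using x0 x_item x_agent by (intro sum_mono agent_load_le[OF inv \<open>finite M\<close> \<open>finite N\<close>]) auto
  also have "\<dots> = (\<Sum>a \<in> ?Ni. ?m a) + (\<Sum>a \<in> ?Ni. ?p a) + (\<Sum>a \<in> ?Ni. ?c a)"
    by (simp add: sum.distrib)
  finally have le: "(\<Sum>e \<in> {e \<in> E. snd e \<in> N \<and> cls (snd e) = i}. x e)
      \<le> (\<Sum>a \<in> ?Ni. ?m a) + (\<Sum>a \<in> ?Ni. ?p a) + (\<Sum>a \<in> ?Ni. ?c a)" .
  have "(\<Sum>a \<in> ?Ni. ?m a) = (\<Sum>a \<in> ?Ni. if \<not> unmatched (fst S) a then 1 else 0)"
    by (intro sum.cong) auto
  also have "\<dots> = real (card {a \<in> ?Ni. \<not> unmatched (fst S) a})"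
    using assms(3) by (intro sum_indicator_eq_card) simp
  also have "\<dots> = class_value N cls i (fst S)"
    using class_value_matching[OF fX(3,1,2)] by (simp add: conj_assoc)
  finally have m: "(\<Sum>a \<in> ?Ni. ?m a) = class_value N cls i (fst S)" .
  have p: "(\<Sum>a \<in> ?Ni. ?p a) = real (card {a \<in> N. cls a = i \<and> passed_over N mu a S})"
    using assms(3) by (simp add: sum_indicator_eq_card conj_assoc)
  have c: "(\<Sum>a \<in> ?Ni. ?c a) \<le> contested_to_j N S"
    using inv assms(2,3) x_item by (rule contested_load_le)
  show "(\<Sum>e \<in> {e \<in> E. snd e \<in> N \<and> cls (snd e) = i}. x e)
      \<le> class_value N cls i (fst S) + contested_to_j N S
        + real (card {a \<in> N. cls a = i \<and> passed_over N mu a S})"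
    using le m p c by linarith
qed (simp add: class_items_def)

definition potential :: "'a set \<Rightarrow> ('i, 'a) tracked \<Rightarrow> real" where
  "potential N S = contested_to_j N S - class_value N cls i (fst S)"

lemma potential_insert:
  assumes inv: "tracked_inv N mu D S" and "itm \<notin> D" "b \<in> N" "finite D"
  shows "potential N (tracked_update N mu itm S (insert (itm, b) (fst S)))
       = potential N S + (if class_competes N mu itm (fst S) \<and> cls b = j then 1 else 0)
           - (if cls b = i then 1 else 0)"
proof -
  obtain X T Q where S: "S = (X, T, Q)" by (cases S) auto
  from inv have fX: "finite X" "fst ` X \<subseteq> D" "T \<subseteq> D" by (auto simp: tracked_inv_def S)
  have iX: "itm \<notin> fst ` X" and iT: "itm \<notin> T" using fX assms(2) by auto
  have fT: "finite T" using fX(3) assms(4) finite_subset by blast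
  let ?y = "class_items N cls j X" and ?y' = "class_items N cls j (insert (itm, b) X)"
  have y': "?y' ob = (if ob = itm then (if cls b = j then 1 else 0) else ?y ob)" for ob
    using class_items_insert[OF iX assms(3)] by simp
  have V: "class_value N cls i (insert (itm, b) X) = class_value N cls i X + (if cls b = i then 1 else 0)"
    using iX fX(1) assms(3) by (intro class_value_insert) force+
  have same_T: "{ob \<in> T. ?y' ob = 1} = {ob \<in> T. ?y ob = 1}" using iT y' by auto
  have C: "contested_to_j N (tracked_update N mu itm S (insert (itm, b) X)) = contested_to_j N S
           + (if class_competes N mu itm X \<and> cls b = j then 1 else 0)"
  proof (cases "class_competes N mu itm X \<and> cls b = j")
    case True
    then have "{ob \<in> insert itm T. ?y' ob = 1} = insert itm {ob \<in> T. ?y ob = 1}" using same_T y' by auto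
    then show ?thesis using True iT fT by (simp add: contested_to_j_def tracked_update_def S)
  next
    case False
    then have "class_competes N mu itm X \<Longrightarrow> {ob \<in> insert itm T. ?y' ob = 1} = {ob \<in> T. ?y ob = 1}"
      using same_T y' iT by auto
    then show ?thesis using False same_T by (auto simp: contested_to_j_def tracked_update_def S)
  qed
  show ?thesis using C V by (simp add: potential_def S)
qed

lemma potential_step:
  assumes inv: "tracked_inv N mu D S" and "itm \<notin> D" "finite D" "finite N"
  shows "measure_pmf.expectation (tracked_step N mu itm S) (potential N) \<le> potential N S"
proof -
  let ?X = "fst S"
  let ?C1 = "low_cands N mu itm ?X" and ?C2 = "high_cands N mu itm ?X"
  let ?competes = "class_competes N mu itm ?X"
  have ins: "potential N (tracked_update N mu itm S (insert (itm, b) ?X))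
       = potential N S + (if ?competes \<and> cls b = j then 1 else 0) - (if cls b = i then 1 else 0)"
    if "b \<in> N" for b
    using potential_insert[OF inv assms(2) that assms(3)] .
  show ?thesis
  proof (cases "?C1 \<noteq> {}")
    case True
    let ?Z = "cls ` ?C1"
    have fZ: "finite ?Z" "?Z \<noteq> {}" using True assms(4) by auto
    have pk: "first_of_class ?C1 c \<in> N" "cls (first_of_class ?C1 c) = c" if "c \<in> ?Z" for c
      using first_of_class_spec(1,2)[OF finite_low_cands[OF assms(4)] that]
      by (auto simp: low_cands_def)
    have "measure_pmf.expectation (tracked_step N mu itm S) (potential N)
        = (\<Sum>c \<in> ?Z. potential N S + ((if ?competes \<and> c = j then 1 else 0) - (if c = i then 1 else 0)))
            / real (card ?Z)"
      using True assms(4)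
      by (simp add: expectation_tracked_step expectation_hr_step ins pk add_diff_eq cong: sum.cong)
    \<comment> \<open>a contested item has class i among the uniformly drawn classes, so i is drawn as often as j\<close>
    also have "\<dots> \<le> potential N S"
      using fZ by (intro average_le_of_sum_nonpos sum_indicator_diff_nonpos) (auto simp: class_competes_def)
    finally show ?thesis .
  next
    case False
    then have "\<not> ?competes" by (simp add: class_competes_def)
    show ?thesis
    proof (cases "?C2 \<noteq> {}")
      case True
      have "lowest_mu ?C2 mu \<in> N"
        using lowest_mu_spec(1)[OF finite_high_cands[OF assms(4)] True] by (auto simp: high_cands_def)
      then show ?thesis
        using False True assms(4) \<open>\<not> ?competes\<close>
        by (simp add: expectation_tracked_step expectation_hr_step ins)
    next
      case False2: False
      have "potential N (tracked_update N mu itm S ?X) = potential N S"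
        using \<open>\<not> ?competes\<close> by (simp add: potential_def contested_to_j_def tracked_update_def)
      then show ?thesis using False False2 assms(4) by (simp add: expectation_tracked_step expectation_hr_step)
    qed
  qed
qed

lemma potential_run:
  assumes "tracked_inv N mu D S" "distinct os" "set os \<inter> D = {}" "finite D" "finite N"
  shows "measure_pmf.expectation (tracked_run N mu S os) (potential N) \<le> potential N S"
  using assms
proof (induction os arbitrary: S D)
  case (Cons itm os)
  have "measure_pmf.expectation (tracked_run N mu S (itm # os)) (potential N)
      = measure_pmf.expectation (tracked_step N mu itm S)
          (\<lambda>S'. measure_pmf.expectation (tracked_run N mu S' os) (potential N))"
    using Cons.prems(5) by (rule expectation_tracked_run_Cons)
  also have "\<dots> \<le> measure_pmf.expectation (tracked_step N mu itm S) (potential N)"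
  proof (rule expectation_mono_finite[OF finite_set_tracked_step[OF Cons.prems(5)]])
    fix S' assume S': "S' \<in> set_pmf (tracked_step N mu itm S)"
    have "tracked_inv N mu (insert itm D) S'"
      using tracked_inv_step[OF Cons.prems(1) _ Cons.prems(5) S'] Cons.prems(3) by auto
    then show "measure_pmf.expectation (tracked_run N mu S' os) (potential N) \<le> potential N S'"
      using Cons.IH[of "insert itm D" S'] Cons.prems by auto
  qed
  also have "\<dots> \<le> potential N S"
    using potential_step[OF Cons.prems(1) _ Cons.prems(4,5)] Cons.prems(3) by auto
  finally show ?case .
qed simp

lemma expectation_contested_to_j_le:
  assumes "finite N" "distinct items"
  shows "measure_pmf.expectation (tracked_run N mu ({}, {}, {}) items) (contested_to_j N)
       \<le> measure_pmf.expectation (tracked_run N mu ({}, {}, {}) items) (\<lambda>S. class_value N cls i (fst S))"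
proof -
  let ?p = "tracked_run N mu ({}, {}, {}) items"
  have int: "integrable (measure_pmf ?p) f" for f :: "_ \<Rightarrow> real"
    using finite_set_tracked_run[OF assms(1)] by (rule integrable_measure_pmf_finite)
  have "measure_pmf.expectation ?p (potential N) \<le> potential N ({}, {}, {})"
    using assms by (intro potential_run[of N mu "{}"]) (auto simp: tracked_inv_def matching_def)
  also have "\<dots> = 0" by (simp add: potential_def contested_to_j_def class_value_def)
  finally show ?thesis
    unfolding potential_def using int by (simp add: Bochner_Integration.integral_diff)
qed

definition passed_over_prob :: "'a set \<Rightarrow> ('a \<Rightarrow> real) \<Rightarrow> 'i list \<Rightarrow> 'a \<Rightarrow> real" where
  "passed_over_prob N mu items a = measure_pmf.expectation (tracked_run N mu ({}, {}, {}) items)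
     (\<lambda>S. if passed_over N mu a S then 1 else 0)"

lemma expectation_frac_value_le:
  fixes M :: "'i set"
  assumes "finite M" "finite N" "E \<subseteq> M \<times> N" "distinct items" "set items = M"
  shows "measure_pmf.expectation (hybrid_ranking \<gamma> E N cls rk mu items)
           (\<lambda>X. frac_value M N E cls i (class_items N cls j X))
     \<le> 2 * measure_pmf.expectation (hybrid_ranking \<gamma> E N cls rk mu items) (class_value N cls i)
       + (\<Sum>a \<in> {a \<in> N. cls a = i}. passed_over_prob N mu items a)"
proof -
  let ?p = "tracked_run N mu ({}, {}, {}) items"
  let ?Ni = "{a \<in> N. cls a = i}"
  let ?B = "\<lambda>a S. if passed_over N mu a S then 1 else 0 :: real"
  let ?V = "\<lambda>S. class_value N cls i (fst S)"
  have fin_p: "finite (set_pmf ?p)" by (rule finite_set_tracked_run[OF assms(2)])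
  have int: "integrable (measure_pmf ?p) f" for f :: "_ \<Rightarrow> real"
    using fin_p by (rule integrable_measure_pmf_finite)
  have pointwise: "frac_value M N E cls i (class_items N cls j (fst S))
      \<le> ?V S + contested_to_j N S + (\<Sum>a \<in> ?Ni. ?B a S)" if "S \<in> set_pmf ?p" for S
  proof -
    have "tracked_inv N mu M S" using tracked_inv_final[OF assms(2,4) that] assms(5) by simp
    moreover have "(\<Sum>a \<in> ?Ni. ?B a S) = real (card {a \<in> N. cls a = i \<and> passed_over N mu a S})"
      using assms(2) by (simp add: sum_indicator_eq_card conj_assoc)
    ultimately show ?thesis using frac_value_le_tracked assms(1-3) by simp
  qed
  have "measure_pmf.expectation ?p (\<lambda>S. frac_value M N E cls i (class_items N cls j (fst S)))
      \<le> measure_pmf.expectation ?p (\<lambda>S. ?V S + contested_to_j N S + (\<Sum>a \<in> ?Ni. ?B a S))"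
    using fin_p pointwise by (rule expectation_mono_finite)
  also have "\<dots> = measure_pmf.expectation ?p ?V + measure_pmf.expectation ?p (contested_to_j N)
        + (\<Sum>a \<in> ?Ni. passed_over_prob N mu items a)"
    unfolding passed_over_prob_def using int
    by (simp add: Bochner_Integration.integral_add Bochner_Integration.integral_sum)
  also have "\<dots> \<le> 2 * measure_pmf.expectation ?p ?V + (\<Sum>a \<in> ?Ni. passed_over_prob N mu items a)"
    using expectation_contested_to_j_le[OF assms(2,4), of mu] by simp
  finally show ?thesis by (simp add: expectation_hybrid_ranking_tracked)
qed

section \<open>Removing an agent\<close>

lemma lowest_mu_remove:
  assumes "finite C" "a \<in> C" "lowest_mu C mu \<noteq> a" "mu a \<notin> mu ` (C - {a})"
  shows "lowest_mu (C - {a}) mu = lowest_mu C mu"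
proof -
  let ?b = "lowest_mu C mu"
  have b: "?b \<in> C - {a}" "\<And>c. c \<in> C \<Longrightarrow> mu ?b \<le> mu c"
    using lowest_mu_spec[OF assms(1)] assms(2,3) by auto
  have "mu ?b \<noteq> mu a" using b(1) assms(4) by (metis image_eqI)
  then have lt: "mu ?b < mu a" using b(2)[OF assms(2)] by simp
  have "(\<lambda>x. x \<in> C - {a} \<and> (\<forall>y \<in> C - {a}. mu x \<le> mu y)) = (\<lambda>x. x \<in> C \<and> (\<forall>y \<in> C. mu x \<le> mu y))"
  proof (intro ext iffI)
    fix x assume x: "x \<in> C - {a} \<and> (\<forall>y \<in> C - {a}. mu x \<le> mu y)"
    then have "mu x \<le> mu ?b" using b(1) by blast
    then have "mu x \<le> mu a" using lt by simp
    then show "x \<in> C \<and> (\<forall>y \<in> C. mu x \<le> mu y)" using x by auto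
  next
    fix x assume x: "x \<in> C \<and> (\<forall>y \<in> C. mu x \<le> mu y)"
    then have "x \<noteq> a" using b(1) lt by force
    then show "x \<in> C - {a} \<and> (\<forall>y \<in> C - {a}. mu x \<le> mu y)" using x by auto
  qed
  then show ?thesis by (simp add: lowest_mu_def)
qed

lemma tracked_step_remove_high:
  assumes "a \<in> N" "\<not> mu a \<le> \<gamma>" "mu a \<notin> mu ` (N - {a})" "unmatched (fst S) a" "finite N"
  obtains (same) "tracked_step N mu itm S = tracked_step (N - {a}) mu itm S"
    | (matches) S' where "tracked_step N mu itm S = return_pmf S'" "\<not> unmatched (fst S') a"
proof -
  let ?X = "fst S"
  have low: "low_cands (N - {a}) mu itm ?X = low_cands N mu itm ?X"
    using assms(2) by (auto simp: low_cands_def)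
  then have upd: "tracked_update (N - {a}) mu itm S = tracked_update N mu itm S"
    by (simp add: tracked_update_def class_competes_def fun_eq_iff)
  show thesis
  proof (cases "low_cands N mu itm ?X \<noteq> {} \<or> (itm, a) \<notin> E")
    case True
    then have "high_cands N mu itm ?X \<noteq> {} \<Longrightarrow> low_cands N mu itm ?X = {} \<Longrightarrow>
        high_cands (N - {a}) mu itm ?X = high_cands N mu itm ?X"
      by (auto simp: high_cands_def)
    then have "hr_step \<gamma> E (N - {a}) cls rk mu itm ?X = hr_step \<gamma> E N cls rk mu itm ?X"
      using True by (auto simp: hr_step_eq low high_cands_def)
    then show thesis using that(1) by (simp add: tracked_step_def upd)
  next
    case False
    then have no_low: "low_cands N mu itm ?X = {}" and adj: "(itm, a) \<in> E" by auto
    let ?C = "high_cands N mu itm ?X" and ?C' = "high_cands (N - {a}) mu itm ?X"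
    have aC: "a \<in> ?C" using adj assms by (auto simp: high_cands_def)
    have C': "?C' = ?C - {a}" by (auto simp: high_cands_def)
    have fC: "finite ?C" using assms(5) by simp
    show thesis
    proof (cases "lowest_mu ?C mu = a")
      case True
      have "tracked_step N mu itm S = return_pmf (tracked_update N mu itm S (insert (itm, a) ?X))"
        using no_low aC True by (auto simp: tracked_step_def hr_step_eq)
      then show thesis using that(2) by (auto simp: unmatched_def)
    next
      case False
      have "mu a \<notin> mu ` (?C - {a})" using assms(3) by (auto simp: high_cands_def)
      then have "lowest_mu ?C' mu = lowest_mu ?C mu"
        using lowest_mu_remove[OF fC aC False] C' by simp
      moreover have "?C' \<noteq> {}" using lowest_mu_spec(1)[OF fC, of mu] aC False C' by auto
      ultimately have "hr_step \<gamma> E (N - {a}) cls rk mu itm ?X = hr_step \<gamma> E N cls rk mu itm ?X"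
        using no_low aC by (auto simp: hr_step_eq low)
      then show thesis using that(1) by (simp add: tracked_step_def upd)
    qed
  qed
qed

lemma passed_over_le_without:
  assumes "a \<in> N" "\<not> mu a \<le> \<gamma>" "mu a \<notin> mu ` (N - {a})" "finite N"
  shows "measure_pmf.expectation (tracked_run N mu S os) (\<lambda>S'. if passed_over N mu a S' then 1 else 0 :: real)
       \<le> measure_pmf.expectation (tracked_run (N - {a}) mu S os)
            (\<lambda>S'. if uncontested_to_j N a S' then 1 else 0)"
proof (induction os arbitrary: S)
  case Nil
  show ?case by (simp add: passed_over_def)
next
  case (Cons itm os)
  let ?B = "\<lambda>S'. if passed_over N mu a S' then 1 else 0 :: real"
  let ?P = "\<lambda>S'. if uncontested_to_j N a S' then 1 else 0 :: real"
  have finite_without: "finite (N - {a})" using assms(4) by simp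
  have matched: "measure_pmf.expectation (tracked_run N mu S' os') ?B \<le> 0"
    if "\<not> unmatched (fst S') a" for S' os'
  proof (rule expectation_le_const_finite[OF finite_set_tracked_run[OF assms(4)]])
    fix S'' assume "S'' \<in> set_pmf (tracked_run N mu S' os')"
    then have "fst S' \<subseteq> fst S''" using tracked_run_mono assms(4) by blast
    then show "?B S'' \<le> 0" using that by (auto simp: passed_over_def unmatched_def)
  qed
  have nonneg: "0 \<le> measure_pmf.expectation p ?P" for p by (rule expectation_nonneg_pmf) simp
  show ?case
  proof (cases "unmatched (fst S) a")
    case False
    then show ?thesis
      using matched[OF False, of "itm # os"] nonneg[of "tracked_run (N - {a}) mu S (itm # os)"]
      by linarith
  next
    case True
    show ?thesis
    proof (rule tracked_step_remove_high[OF assms(1-3) True assms(4), of itm])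
      assume same: "tracked_step N mu itm S = tracked_step (N - {a}) mu itm S"
      have "measure_pmf.expectation (tracked_run N mu S (itm # os)) ?B
          = measure_pmf.expectation (tracked_step N mu itm S)
              (\<lambda>S'. measure_pmf.expectation (tracked_run N mu S' os) ?B)"
        by (rule expectation_tracked_run_Cons[OF assms(4)])
      also have "\<dots> = measure_pmf.expectation (tracked_step (N - {a}) mu itm S)
              (\<lambda>S'. measure_pmf.expectation (tracked_run N mu S' os) ?B)"
        using same by simp
      also have "\<dots> \<le> measure_pmf.expectation (tracked_step (N - {a}) mu itm S)
              (\<lambda>S'. measure_pmf.expectation (tracked_run (N - {a}) mu S' os) ?P)"
        by (rule expectation_mono_finite[OF finite_set_tracked_step[OF finite_without]]) (rule Cons.IH)
      also have "\<dots> = measure_pmf.expectation (tracked_run (N - {a}) mu S (itm # os)) ?P"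
        by (rule expectation_tracked_run_Cons[OF finite_without, symmetric])
      finally show ?thesis .
    next
      fix S' assume S': "tracked_step N mu itm S = return_pmf S'" "\<not> unmatched (fst S') a"
      then have "measure_pmf.expectation (tracked_run N mu S (itm # os)) ?B \<le> 0"
        using matched[OF S'(2)] by (simp add: bind_return_pmf)
      then show ?thesis using nonneg[of "tracked_run (N - {a}) mu S (itm # os)"] by linarith
    qed
  qed
qed

lemma first_of_class_cong:
  assumes "\<And>x. (x \<in> C \<and> cls x = c) = (x \<in> C' \<and> cls x = c)"
  shows "first_of_class C c = first_of_class C' c"
proof -
  have "(\<lambda>x. x \<in> C \<and> cls x = c \<and> (\<forall>b \<in> C. cls b = c \<longrightarrow> rk x \<le> rk b))
      = (\<lambda>x. x \<in> C' \<and> cls x = c \<and> (\<forall>b \<in> C'. cls b = c \<longrightarrow> rk x \<le> rk b))"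
    using assms by blast
  then show ?thesis by (simp add: first_of_class_def)
qed

lemma first_of_class_insert:
  assumes "finite C" "inj_on rk N" "C \<subseteq> N" "a \<in> N" "c \<in> cls ` C"
  shows "first_of_class (insert a C) c = a \<or> first_of_class (insert a C) c = first_of_class C c"
proof -
  let ?m = "first_of_class (insert a C) c" and ?m' = "first_of_class C c"
  have m: "?m \<in> insert a C" "\<And>b. b \<in> insert a C \<Longrightarrow> cls b = c \<Longrightarrow> rk ?m \<le> rk b" "cls ?m = c"
    using first_of_class_spec[of "insert a C" c] assms(1,5) by auto
  have m': "?m' \<in> C" "\<And>b. b \<in> C \<Longrightarrow> cls b = c \<Longrightarrow> rk ?m' \<le> rk b" "cls ?m' = c"
    using first_of_class_spec[of C c] assms(1,5) by auto
  have "?m = ?m'" if "?m \<noteq> a"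
  proof -
    have "?m \<in> C" using m(1) that by simp
    then have "rk ?m = rk ?m'" using m m' by (auto intro: order_antisym)
    then show ?thesis using \<open>?m \<in> C\<close> m'(1) assms(2,3) by (auto dest: inj_onD)
  qed
  then show ?thesis by blast
qed

lemma low_cands_insert_low:
  assumes "a \<in> N" "mu a \<le> \<gamma>" "(itm, a) \<in> E" "unmatched X a"
  shows "low_cands N mu itm X = insert a (low_cands (N - {a}) mu itm X)"
  using assms by (auto simp: low_cands_def)

lemma hr_step_remove_nonadjacent:
  assumes "(itm, a) \<notin> E"
  shows "hr_step \<gamma> E (N - {a}) cls rk mu itm X = hr_step \<gamma> E N cls rk mu itm X"
proof -
  have "low_cands (N - {a}) mu itm X = low_cands N mu itm X"
    "high_cands (N - {a}) mu itm X = high_cands N mu itm X"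
    using assms by (auto simp: low_cands_def high_cands_def)
  then show ?thesis by (simp add: hr_step_eq)
qed

lemma uncontested_to_j_update_insert:
  assumes "itm \<notin> fst ` fst S" "itm \<notin> uncontested S" "b \<in> N"
  shows "uncontested_to_j N a (tracked_update N' mu itm S (insert (itm, b) (fst S)))
     \<longleftrightarrow> uncontested_to_j N a S \<or> (\<not> class_competes N' mu itm (fst S) \<and> (itm, a) \<in> E \<and> cls b = j)"
proof -
  have y: "class_items N cls j (insert (itm, b) (fst S)) ob =
      (if ob = itm then (if cls b = j then 1 else 0) else class_items N cls j (fst S) ob)" for ob
    using class_items_insert[OF assms(1,3)] by simp
  have q: "ob \<in> uncontested S \<Longrightarrow> ob \<noteq> itm" for ob using assms(2) by auto
  show ?thesis
  proof (cases "class_competes N' mu itm (fst S)")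
    case True
    then show ?thesis
      unfolding uncontested_to_j_def tracked_update_def by (auto simp: y dest: q)
  next
    case False
    then show ?thesis
      unfolding uncontested_to_j_def tracked_update_def by (auto simp: y dest: q)
  qed
qed

lemma uncontested_to_j_update_same:
  assumes "itm \<notin> fst ` fst S"
  shows "uncontested_to_j N a (tracked_update N' mu itm S (fst S)) = uncontested_to_j N a S"
proof -
  have "class_items N cls j (fst S) itm = 0" using assms by (force simp: class_items_def)
  then show ?thesis by (auto simp: uncontested_to_j_def tracked_update_def)
qed

end

lemma average_le_twice_average:
  fixes f g :: "nat \<Rightarrow> real"
  assumes "finite Z" "Z \<noteq> {}" "\<And>c. c \<in> Z \<Longrightarrow> f c \<le> 2 * g c + p"
  shows "(\<Sum>c \<in> Z. f c) / card Z \<le> 2 * ((\<Sum>c \<in> Z. g c) / card Z) + p"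
proof -
  have z: "real (card Z) > 0" using assms(1,2) by (simp add: card_gt_0_iff)
  have "(\<Sum>c \<in> Z. f c) \<le> (\<Sum>c \<in> Z. 2 * g c + p)" using assms(3) by (rule sum_mono)
  also have "\<dots> = 2 * (\<Sum>c \<in> Z. g c) + card Z * p" by (simp add: sum.distrib sum_distrib_left)
  finally show ?thesis using z by (simp add: divide_simps) (simp add: algebra_simps)
qed

lemma average_le_with_extra_term:
  fixes f g e :: "nat \<Rightarrow> real"
  assumes "finite Z" "Z \<noteq> {}" "p = 0 \<or> p = 1"
    and f_bounds: "\<And>c. c \<in> Z \<Longrightarrow> 0 \<le> f c \<and> f c \<le> 1" and g_nonneg: "\<And>c. c \<in> Z \<Longrightarrow> 0 \<le> g c"
    and f_le: "\<And>c. c \<in> Z \<Longrightarrow> f c \<le> 2 * g c + p + e c" and e_le: "(\<Sum>c \<in> Z. e c) \<le> 1"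
  shows "(\<Sum>c \<in> Z. f c) / card Z \<le> 2 * ((1 + (\<Sum>c \<in> Z. g c)) / (real (card Z) + 1)) + p"
proof -
  define s where "s = (\<Sum>c \<in> Z. f c)"
  define G where "G = (\<Sum>c \<in> Z. g c)"
  define z where "z = real (card Z)"
  have z1: "1 \<le> z" using assms(1,2) by (simp add: z_def Suc_le_eq card_gt_0_iff)
  have G0: "0 \<le> G" unfolding G_def using g_nonneg by (rule sum_nonneg)
  have s0: "0 \<le> s" unfolding s_def using f_bounds by (simp add: sum_nonneg)
  have s_le_z: "s \<le> z" unfolding s_def z_def using sum_mono[of Z f "\<lambda>_. 1"] f_bounds by simp
  have "s \<le> (\<Sum>c \<in> Z. 2 * g c + p + e c)" unfolding s_def using f_le by (rule sum_mono)
  also have "\<dots> = 2 * G + z * p + (\<Sum>c \<in> Z. e c)"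
    by (simp add: G_def z_def sum.distrib sum_distrib_left)
  finally have s_le: "s \<le> 2 * G + z * p + 1" using e_le by linarith
  have "s / z \<le> 2 * ((1 + G) / (z + 1)) + p"
  proof (cases "p = 1")
    case True
    have "s / z \<le> 1" using s_le_z z1 by (simp add: divide_le_eq)
    moreover have "0 \<le> 2 * ((1 + G) / (z + 1))" using G0 z1 by simp
    ultimately show ?thesis using True by linarith
  next
    case False
    then have p0: "p = 0" using assms(3) by auto
    have "s * (z + 1) \<le> 2 * z * (1 + G)"
    proof (cases "2 * G + 1 \<le> z")
      case True
      have "s * (z + 1) \<le> (2 * G + 1) * (z + 1)" using s_le p0 z1 by (intro mult_right_mono) auto
      also have "\<dots> \<le> 2 * z * (1 + G)" using True by (simp add: algebra_simps)
      finally show ?thesis .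
    next
      case False
      have "s * (z + 1) \<le> z * (z + 1)" using s_le_z z1 by (intro mult_right_mono) auto
      also have "\<dots> \<le> z * (2 * G + 2)" using False z1 by (intro mult_left_mono) auto
      finally show ?thesis by (simp add: algebra_simps)
    qed
    then show ?thesis using z1 p0 by (simp add: divide_le_eq field_simps)
  qed
  then show ?thesis by (simp add: s_def G_def z_def)
qed

text \<open>One step of the comparison between the run without a low agent a of class i, in which F
  is the remaining probability that a sees an uncontested item go to class j, and the run with a,
  in which G is the remaining probability that a gets matched.\<close>

locale low_agent_step = hr_setting \<gamma> E cls rk i j
    for \<gamma> :: real and E :: "('i \<times> 'a) set" and cls :: "'a \<Rightarrow> nat" and rk :: "'a \<Rightarrow> nat"
      and i j :: nat +
  fixes N :: "'a set" and a :: 'a and mu :: "'a \<Rightarrow> real" and S :: "('i, 'a) tracked" and itm :: 'i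
    and F :: "('i, 'a) tracked \<Rightarrow> real" and G :: "('i \<times> 'a) set \<Rightarrow> real"
  assumes a_in: "a \<in> N" and a_low: "mu a \<le> \<gamma>" and a_class: "cls a = i"
    and inj: "inj_on rk N" and fin: "finite N" and a_free: "unmatched (fst S) a"
    and itm_fresh: "itm \<notin> fst ` fst S" "itm \<notin> uncontested S"
    and F_bounds: "\<And>S'. 0 \<le> F S' \<and> F S' \<le> 1"
    and G_nonneg: "\<And>X'. 0 \<le> G X'"
    and G_matched: "\<And>X'. \<not> unmatched X' a \<Longrightarrow> G X' = 1"
    and F_le: "\<And>X'. X' \<in> set_pmf (hr_step \<gamma> E (N - {a}) cls rk mu itm (fst S)) \<Longrightarrow>
      F (tracked_update (N - {a}) mu itm S X')
        \<le> 2 * G X' + (if uncontested_to_j N a (tracked_update (N - {a}) mu itm S X') then 1 else 0)"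
begin

abbreviation cands :: "'a set" where "cands \<equiv> low_cands N mu itm (fst S)"
abbreviation cands' :: "'a set" where "cands' \<equiv> low_cands (N - {a}) mu itm (fst S)"
abbreviation after_draw :: "'a set \<Rightarrow> nat \<Rightarrow> ('i \<times> 'a) set" where
  "after_draw C c \<equiv> insert (itm, first_of_class C c) (fst S)"

lemma finite_without: "finite (N - {a})"
  using fin by simp

lemma step_nonadjacent:
  assumes "(itm, a) \<notin> E"
  shows "measure_pmf.expectation (tracked_step (N - {a}) mu itm S) F
    \<le> 2 * measure_pmf.expectation (hr_step \<gamma> E N cls rk mu itm (fst S)) G
      + (if uncontested_to_j N a S then 1 else 0)"
proof -
  let ?p = "hr_step \<gamma> E (N - {a}) cls rk mu itm (fst S)"
  let ?u = "if uncontested_to_j N a S then 1 else 0 :: real"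
  have fin_p: "finite (set_pmf ?p)" by (rule finite_set_hr_step[OF finite_without])
  have "F (tracked_update (N - {a}) mu itm S X') \<le> 2 * G X' + ?u" if X': "X' \<in> set_pmf ?p" for X'
  proof -
    have "uncontested_to_j N a (tracked_update (N - {a}) mu itm S X') = uncontested_to_j N a S"
      using X' finite_without
    proof (cases rule: hr_step_cases)
      case 1
      then show ?thesis using uncontested_to_j_update_same[OF itm_fresh(1)] by simp
    next
      case (2 b)
      then show ?thesis using uncontested_to_j_update_insert[OF itm_fresh, of b] assms by simp
    qed
    then show ?thesis using F_le[OF X'] by simp
  qed
  then have "measure_pmf.expectation ?p (\<lambda>X'. F (tracked_update (N - {a}) mu itm S X'))
      \<le> measure_pmf.expectation ?p (\<lambda>X'. 2 * G X' + ?u)"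
    by (rule expectation_mono_finite[OF fin_p])
  also have "\<dots> = 2 * measure_pmf.expectation ?p G + ?u"
    using fin_p by (simp add: integrable_measure_pmf_finite)
  finally show ?thesis
    using hr_step_remove_nonadjacent[OF assms] by (simp add: expectation_tracked_step)
qed

lemma cands_insert:
  assumes "(itm, a) \<in> E"
  shows "cands = insert a cands'"
  using a_in a_low assms a_free by (rule low_cands_insert_low)

lemma expectation_G_adjacent:
  assumes "(itm, a) \<in> E"
  shows "measure_pmf.expectation (hr_step \<gamma> E N cls rk mu itm (fst S)) G
       = (\<Sum>c \<in> cls ` cands. G (after_draw cands c)) / card (cls ` cands)"
  using fin cands_insert[OF assms] by (simp add: expectation_hr_step)

lemma step_alone:
  assumes "(itm, a) \<in> E" "cands' = {}"
  shows "measure_pmf.expectation (tracked_step (N - {a}) mu itm S) F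
    \<le> 2 * measure_pmf.expectation (hr_step \<gamma> E N cls rk mu itm (fst S)) G
      + (if uncontested_to_j N a S then 1 else 0)"
proof -
  have "cands = {a}" using cands_insert[OF assms(1)] assms(2) by simp
  then have "first_of_class cands i = a" using first_of_class_spec(1)[of cands i] a_class by auto
  then have "measure_pmf.expectation (hr_step \<gamma> E N cls rk mu itm (fst S)) G = 1"
    using expectation_G_adjacent[OF assms(1)] \<open>cands = {a}\<close> a_class G_matched
    by (simp add: unmatched_def)
  moreover have "measure_pmf.expectation (tracked_step (N - {a}) mu itm S) F \<le> 1"
    using F_bounds by (intro expectation_le_const_finite finite_set_tracked_step finite_without) auto
  ultimately show ?thesis by simp
qed

lemma expectation_F_adjacent:
  assumes "cands' \<noteq> {}"
  shows "measure_pmf.expectation (tracked_step (N - {a}) mu itm S) F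
       = (\<Sum>c \<in> cls ` cands'. F (tracked_update (N - {a}) mu itm S (after_draw cands' c))) / card (cls ` cands')"
  using finite_without assms by (simp add: expectation_tracked_step expectation_hr_step)

lemma first_of_class_other:
  assumes "(itm, a) \<in> E" "c \<noteq> i"
  shows "first_of_class cands c = first_of_class cands' c"
  using assms a_class by (intro first_of_class_cong) (auto simp: cands_insert)

lemma F_le_after_draw:
  assumes "(itm, a) \<in> E" "c \<in> cls ` cands'"
  shows "F (tracked_update (N - {a}) mu itm S (after_draw cands' c))
    \<le> 2 * G (after_draw cands' c)
      + (if uncontested_to_j N a S \<or> (\<not> class_competes (N - {a}) mu itm (fst S) \<and> c = j) then 1 else 0)"
proof -
  have fC': "finite cands'" using finite_without by simp
  have "after_draw cands' c \<in> set_pmf (hr_step \<gamma> E (N - {a}) cls rk mu itm (fst S))"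
    using assms(2) fC' by (auto simp: hr_step_eq)
  moreover have "first_of_class cands' c \<in> N" "cls (first_of_class cands' c) = c"
    using first_of_class_spec(1,2)[OF fC' assms(2)] by (auto simp: low_cands_def)
  ultimately show ?thesis
    using F_le uncontested_to_j_update_insert[OF itm_fresh, of "first_of_class cands' c"] assms(1)
    by fastforce
qed

lemma step_class_new:
  assumes adj: "(itm, a) \<in> E" and ne: "cands' \<noteq> {}" and new: "i \<notin> cls ` cands'"
  shows "measure_pmf.expectation (tracked_step (N - {a}) mu itm S) F
    \<le> 2 * measure_pmf.expectation (hr_step \<gamma> E N cls rk mu itm (fst S)) G
      + (if uncontested_to_j N a S then 1 else 0)"
proof -
  let ?Z = "cls ` cands'" and ?U = "tracked_update (N - {a}) mu itm S"
  let ?u = "if uncontested_to_j N a S then 1 else 0 :: real"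
  have fZ: "finite ?Z" "?Z \<noteq> {}" using finite_without ne by auto
  have Z: "cls ` cands = insert i ?Z" using cands_insert[OF adj] a_class by auto
  have "first_of_class cands i \<in> cands" "cls (first_of_class cands i) = i"
    using first_of_class_spec(1,2)[of cands i] fin Z by auto
  then have a_first: "first_of_class cands i = a" using cands_insert[OF adj] new by (metis imageI insertE)
  have "(\<Sum>c \<in> cls ` cands. G (after_draw cands c)) = G (after_draw cands i) + (\<Sum>c \<in> ?Z. G (after_draw cands c))"
    unfolding Z using fZ new by simp
  also have "G (after_draw cands i) = 1" using a_first G_matched by (simp add: unmatched_def)
  also have "(\<Sum>c \<in> ?Z. G (after_draw cands c)) = (\<Sum>c \<in> ?Z. G (after_draw cands' c))"
  proof (rule sum.cong[OF refl])
    fix c assume "c \<in> ?Z"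
    then have "c \<noteq> i" using new by blast
    then show "G (after_draw cands c) = G (after_draw cands' c)" using first_of_class_other[OF adj] by simp
  qed
  finally have G_sum: "(\<Sum>c \<in> cls ` cands. G (after_draw cands c)) = 1 + (\<Sum>c \<in> ?Z. G (after_draw cands' c))" .
  have card_Z: "real (card (cls ` cands)) = real (card ?Z) + 1" using Z fZ new by simp
  have "\<not> class_competes (N - {a}) mu itm (fst S)" using new by (simp add: class_competes_def)
  then have F_le_j: "F (?U (after_draw cands' c)) \<le> 2 * G (after_draw cands' c) + ?u + (if c = j then 1 else 0)"
    if "c \<in> ?Z" for c
    using F_le_after_draw[OF adj that] by (auto split: if_splits)
  \<comment> \<open>the item counts against a only if class j is drawn; the extra class i of the full run,
    which takes a, pays for this\<close>
  have "(\<Sum>c \<in> ?Z. F (?U (after_draw cands' c))) / card ?Z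
      \<le> 2 * ((1 + (\<Sum>c \<in> ?Z. G (after_draw cands' c))) / (real (card ?Z) + 1)) + ?u"
  proof (rule average_le_with_extra_term[OF fZ _ _ _ F_le_j])
    show "(\<Sum>c \<in> ?Z. if c = j then 1 else 0 :: real) \<le> 1" using fZ(1) by (simp add: sum.delta)
  qed (use F_bounds G_nonneg in auto)
  then show ?thesis
    using expectation_F_adjacent[OF ne] expectation_G_adjacent[OF adj] G_sum card_Z by simp
qed

lemma step_class_present:
  assumes adj: "(itm, a) \<in> E" and present: "i \<in> cls ` cands'"
  shows "measure_pmf.expectation (tracked_step (N - {a}) mu itm S) F
    \<le> 2 * measure_pmf.expectation (hr_step \<gamma> E N cls rk mu itm (fst S)) G
      + (if uncontested_to_j N a S then 1 else 0)"
proof -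
  let ?Z = "cls ` cands'" and ?U = "tracked_update (N - {a}) mu itm S"
  let ?u = "if uncontested_to_j N a S then 1 else 0 :: real"
  have ne: "cands' \<noteq> {}" using present by auto
  have fC': "finite cands'" using finite_without by simp
  have fZ: "finite ?Z" "?Z \<noteq> {}" using fC' ne by auto
  have Z: "cls ` cands = ?Z" using cands_insert[OF adj] a_class present by auto
  have competes: "class_competes (N - {a}) mu itm (fst S)" using present by (simp add: class_competes_def)
  have "F (?U (after_draw cands' c)) \<le> 2 * G (after_draw cands c) + ?u" if c: "c \<in> ?Z" for c
  proof (cases "c = i")
    case False
    then show ?thesis using F_le_after_draw[OF adj c] competes first_of_class_other[OF adj False] by simp
  next
    case True
    have "cands' \<subseteq> N" by (auto simp: low_cands_def)
    then have "first_of_class cands c = a \<or> first_of_class cands c = first_of_class cands' c"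
      using first_of_class_insert[OF fC' inj _ a_in c] cands_insert[OF adj] by simp
    then show ?thesis
    proof
      assume "first_of_class cands c = a"
      then have "G (after_draw cands c) = 1" using G_matched by (simp add: unmatched_def)
      then show ?thesis using F_bounds[of "?U (after_draw cands' c)"] by simp
    next
      assume "first_of_class cands c = first_of_class cands' c"
      then show ?thesis using F_le_after_draw[OF adj c] competes by simp
    qed
  qed
  with fZ have "(\<Sum>c \<in> ?Z. F (?U (after_draw cands' c))) / card ?Z
      \<le> 2 * ((\<Sum>c \<in> ?Z. G (after_draw cands c)) / card ?Z) + ?u"
    by (rule average_le_twice_average)
  then show ?thesis using expectation_F_adjacent[OF ne] expectation_G_adjacent[OF adj] Z by simp
qed

lemma step_bound:
  "measure_pmf.expectation (tracked_step (N - {a}) mu itm S) F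
    \<le> 2 * measure_pmf.expectation (hr_step \<gamma> E N cls rk mu itm (fst S)) G
      + (if uncontested_to_j N a S then 1 else 0)"
proof (cases "(itm, a) \<in> E")
  case True
  consider "cands' = {}" | "cands' \<noteq> {}" "i \<notin> cls ` cands'" | "i \<in> cls ` cands'" by blast
  then show ?thesis using step_alone step_class_new step_class_present True by cases blast+
qed (rule step_nonadjacent)

end

context hr_setting
begin

definition matched_prob :: "'a set \<Rightarrow> ('a \<Rightarrow> real) \<Rightarrow> 'i list \<Rightarrow> 'a \<Rightarrow> real" where
  "matched_prob N mu items a =
     measure_pmf.expectation (hr_run N mu {} items) (\<lambda>X. if unmatched X a then 0 else 1)"

definition uncontested_prob_without :: "'a set \<Rightarrow> ('a \<Rightarrow> real) \<Rightarrow> 'i list \<Rightarrow> 'a \<Rightarrow> real" where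
  "uncontested_prob_without N mu items a =
     measure_pmf.expectation (tracked_run (N - {a}) mu ({}, {}, {}) items)
       (\<lambda>S. if uncontested_to_j N a S then 1 else 0)"

lemma expectation_matched_stays:
  assumes "\<not> unmatched X a" "finite N"
  shows "measure_pmf.expectation (hr_run N mu X os) (\<lambda>X'. if unmatched X' a then 0 else 1 :: real) = 1"
proof -
  have "measure_pmf.expectation (hr_run N mu X os) (\<lambda>X'. if unmatched X' a then 0 else 1 :: real)
      = measure_pmf.expectation (hr_run N mu X os) (\<lambda>_. 1)"
  proof (rule expectation_cong_pmf)
    fix X' assume "X' \<in> set_pmf (hr_run N mu X os)"
    then have "X \<subseteq> X'" using hr_run_mono assms(2) by blast
    then show "(if unmatched X' a then 0 else 1 :: real) = 1" using assms(1) by (auto simp: unmatched_def)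
  qed
  then show ?thesis by simp
qed

lemma fresh_after_tracked_update:
  assumes "X' \<in> set_pmf (hr_step \<gamma> E N cls rk mu itm (fst S))" "finite N"
    and "set os \<inter> insert itm (fst ` fst S \<union> uncontested S) = {}"
  shows "set os \<inter> (fst ` fst (tracked_update N mu itm S X') \<union> uncontested (tracked_update N mu itm S X')) = {}"
proof -
  have "fst ` X' \<subseteq> insert itm (fst ` fst S)" using assms(1,2) by (elim hr_step_cases) auto
  moreover have "uncontested (tracked_update N mu itm S X') \<subseteq> insert itm (uncontested S)"
    by (auto simp: tracked_update_def)
  ultimately show ?thesis using assms(3) by auto
qed

lemma uncontested_le_twice_matched_run:
  assumes "a \<in> N" "mu a \<le> \<gamma>" "cls a = i" "inj_on rk N" "finite N"
    and "distinct os" "set os \<inter> (fst ` fst S \<union> uncontested S) = {}"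
  shows "measure_pmf.expectation (tracked_run (N - {a}) mu S os)
           (\<lambda>S'. if uncontested_to_j N a S' then 1 else 0 :: real)
     \<le> 2 * measure_pmf.expectation (hr_run N mu (fst S) os) (\<lambda>X'. if unmatched X' a then 0 else 1)
       + (if uncontested_to_j N a S then 1 else 0)"
  using assms(6,7)
proof (induction os arbitrary: S)
  case (Cons itm os)
  let ?P = "\<lambda>S'. if uncontested_to_j N a S' then 1 else 0 :: real"
  let ?m = "\<lambda>X'. if unmatched X' a then 0 else 1 :: real"
  define F where "F = (\<lambda>S'. measure_pmf.expectation (tracked_run (N - {a}) mu S' os) ?P)"
  define G where "G = (\<lambda>X'. measure_pmf.expectation (hr_run N mu X' os) ?m)"
  have finite_without: "finite (N - {a})" using assms(5) by simp
  have F_bounds: "0 \<le> F S' \<and> F S' \<le> 1" for S'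
    unfolding F_def
    by (intro conjI expectation_nonneg_pmf expectation_le_const_finite finite_set_tracked_run finite_without) auto
  have G0: "0 \<le> G X'" for X' unfolding G_def by (rule expectation_nonneg_pmf) simp
  have G_matched: "G X' = 1" if "\<not> unmatched X' a" for X'
    unfolding G_def using that assms(5) by (rule expectation_matched_stays)
  have itm_fresh: "itm \<notin> fst ` fst S" "itm \<notin> uncontested S" using Cons.prems(2) by auto
  have dist: "distinct os"
    and fresh: "set os \<inter> insert itm (fst ` fst S \<union> uncontested S) = {}" using Cons.prems by auto
  show ?case
  proof (cases "unmatched (fst S) a")
    case False
    then have "measure_pmf.expectation (hr_run N mu (fst S) (itm # os)) ?m = 1"
      using assms(5) by (rule expectation_matched_stays)
    moreover have "measure_pmf.expectation (tracked_run (N - {a}) mu S (itm # os)) ?P \<le> 1"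
      by (intro expectation_le_const_finite finite_set_tracked_run finite_without) simp
    ultimately show ?thesis by simp
  next
    case True
    have F_le: "F (tracked_update (N - {a}) mu itm S X')
        \<le> 2 * G X' + ?P (tracked_update (N - {a}) mu itm S X')"
      if X': "X' \<in> set_pmf (hr_step \<gamma> E (N - {a}) cls rk mu itm (fst S))" for X'
      using Cons.IH[OF dist fresh_after_tracked_update[OF X' finite_without fresh]]
      unfolding F_def G_def by simp
    interpret low_agent_step \<gamma> E cls rk i j N a mu S itm F G
      using assms(1-5) True itm_fresh F_bounds G0 G_matched F_le by unfold_locales auto
    have "measure_pmf.expectation (tracked_run (N - {a}) mu S (itm # os)) ?P
        = measure_pmf.expectation (tracked_step (N - {a}) mu itm S) F"
      unfolding F_def by (rule expectation_tracked_run_Cons[OF finite_without])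
    also have "\<dots> \<le> 2 * measure_pmf.expectation (hr_step \<gamma> E N cls rk mu itm (fst S)) G + ?P S"
      by (rule step_bound)
    also have "measure_pmf.expectation (hr_step \<gamma> E N cls rk mu itm (fst S)) G
        = measure_pmf.expectation (hr_run N mu (fst S) (itm # os)) ?m"
      unfolding G_def by (rule expectation_hr_run_Cons[OF assms(5), symmetric])
    finally show ?thesis .
  qed
qed simp

lemma uncontested_prob_le_twice_matched:
  assumes "a \<in> N" "mu a \<le> \<gamma>" "cls a = i" "inj_on rk N" "finite N" "distinct items"
  shows "uncontested_prob_without N mu items a \<le> 2 * matched_prob N mu items a"
  using uncontested_le_twice_matched_run[where mu = mu and S = "({}, {}, {})", OF assms]
  by (simp add: uncontested_prob_without_def matched_prob_def uncontested_to_j_def)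

lemma passed_over_prob_le:
  assumes "a \<in> N" "\<not> mu a \<le> \<gamma>" "mu a \<notin> mu ` (N - {a})" "finite N"
  shows "passed_over_prob N mu items a \<le> uncontested_prob_without N mu items a"
  unfolding passed_over_prob_def uncontested_prob_without_def
  using assms by (rule passed_over_le_without)

lemma expectation_class_value_eq_sum:
  assumes "finite N" "distinct items"
  shows "measure_pmf.expectation (hybrid_ranking \<gamma> E N cls rk mu items) (class_value N cls i)
       = (\<Sum>a \<in> {a \<in> N. cls a = i}. matched_prob N mu items a)"
proof -
  let ?p = "tracked_run N mu ({}, {}, {}) items"
  let ?Ni = "{a \<in> N. cls a = i}"
  have int: "integrable (measure_pmf ?p) f" for f :: "_ \<Rightarrow> real"
    by (rule integrable_measure_pmf_finite[OF finite_set_tracked_run[OF assms(1)]])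
  have "measure_pmf.expectation ?p (\<lambda>S. class_value N cls i (fst S))
      = measure_pmf.expectation ?p (\<lambda>S. \<Sum>a \<in> ?Ni. if unmatched (fst S) a then 0 else 1)"
  proof (rule expectation_cong_pmf)
    fix S assume "S \<in> set_pmf ?p"
    then have "tracked_inv N mu (set items) S" by (rule tracked_inv_final[OF assms])
    then have "class_value N cls i (fst S) = real (card {a \<in> ?Ni. \<not> unmatched (fst S) a})"
      by (simp add: class_value_matching tracked_inv_def conj_assoc)
    also have "\<dots> = (\<Sum>a \<in> ?Ni. if \<not> unmatched (fst S) a then 1 else 0)"
      using assms(1) by (simp add: sum_indicator_eq_card)
    also have "\<dots> = (\<Sum>a \<in> ?Ni. if unmatched (fst S) a then 0 else 1)"
      by (intro sum.cong) auto
    finally show "class_value N cls i (fst S) = (\<Sum>a \<in> ?Ni. if unmatched (fst S) a then 0 else 1)" .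
  qed
  also have "\<dots> = (\<Sum>a \<in> ?Ni. measure_pmf.expectation ?p (\<lambda>S. if unmatched (fst S) a then 0 else 1))"
    using int by (rule Bochner_Integration.integral_sum)
  moreover have "hr_run N mu {} items = map_pmf fst ?p"
    using map_fst_tracked_run[of N mu "({}, {}, {})" items] by simp
  ultimately show ?thesis by (simp add: expectation_hybrid_ranking_tracked matched_prob_def)
qed

end

section \<open>Integrating over the samples\<close>

abbreviation unif01 :: "real measure" where
  "unif01 \<equiv> uniform_measure lborel {0..1}"

lemma prob_space_unif01: "prob_space unif01"
  by (rule prob_space_uniform_measure) simp_all

lemma product_prob_space_unif01: "product_prob_space (\<lambda>_ :: 'a. unif01)"
  using prob_space_unif01 prob_space_imp_sigma_finite
  by (auto simp: product_prob_space_def product_prob_space_axioms_def product_sigma_finite_def)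

lemma prob_space_mu_dist: "prob_space (mu_dist N)"
proof -
  interpret product_prob_space "\<lambda>_ :: 'a. unif01" N by (rule product_prob_space_unif01)
  show ?thesis unfolding mu_dist_def by (rule P.prob_space_axioms)
qed

lemma emeasure_unif01_atMost: "0 \<le> \<gamma> \<Longrightarrow> \<gamma> \<le> 1 \<Longrightarrow> emeasure unif01 {..\<gamma>} = ennreal \<gamma>"
proof -
  assume "0 \<le> \<gamma>" "\<gamma> \<le> 1"
  moreover have "{0..1} \<inter> {..\<gamma>} = {0..\<gamma>}" using \<open>\<gamma> \<le> 1\<close> by auto
  ultimately show ?thesis by (simp add: divide_ennreal_def)
qed

lemma emeasure_unif01_greaterThan:
  "0 \<le> \<gamma> \<Longrightarrow> \<gamma> \<le> 1 \<Longrightarrow> emeasure unif01 {\<gamma><..} = ennreal (1 - \<gamma>)"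
proof -
  assume "0 \<le> \<gamma>" "\<gamma> \<le> 1"
  moreover have "{0..1} \<inter> {\<gamma><..} = {\<gamma><..1}" using \<open>0 \<le> \<gamma>\<close> by auto
  ultimately show ?thesis by (simp add: divide_ennreal_def)
qed

lemma AE_unif01_notin_finite:
  assumes "finite F"
  shows "AE t in unif01. t \<notin> F"
proof -
  have "AE t in lborel. t \<notin> F"
    using assms by (intro AE_not_in countable_imp_null_set_lborel countable_finite)
  then show ?thesis by (intro AE_uniform_measureI) (auto elim!: AE_mp)
qed

lemma nn_integral_mu_dist_split:
  fixes f :: "('a \<Rightarrow> real) \<Rightarrow> ennreal"
  assumes "finite N" "a \<in> N" "f \<in> borel_measurable (mu_dist N)"
  shows "(\<integral>\<^sup>+mu. f mu \<partial>mu_dist N)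
       = (\<integral>\<^sup>+x. (\<integral>\<^sup>+t. f (x(a := t)) \<partial>unif01) \<partial>PiM (N - {a}) (\<lambda>_. unif01))"
proof -
  interpret product_prob_space "\<lambda>_ :: 'a. unif01" by (rule product_prob_space_unif01)
  have "insert a (N - {a}) = N" using assms(2) by auto
  then show ?thesis
    using product_nn_integral_insert[of "N - {a}" a f] assms unfolding mu_dist_def by simp
qed

lemma integrable_mu_dist_bounded:
  fixes h :: "('a \<Rightarrow> real) \<Rightarrow> real"
  assumes "h \<in> borel_measurable (mu_dist N)" "\<And>mu. 0 \<le> h mu \<and> h mu \<le> B"
  shows "integrable (mu_dist N) h"
proof -
  interpret prob_space "mu_dist N" by (rule prob_space_mu_dist)
  show ?thesis using assms by (intro integrable_const_bound[where B = B]) auto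
qed

lemma measurable_component_mu_dist: "b \<in> N \<Longrightarrow> (\<lambda>mu. mu b) \<in> borel_measurable (mu_dist N)"
proof -
  assume "b \<in> N"
  then have "(\<lambda>mu. mu b) \<in> measurable (mu_dist N) unif01"
    unfolding mu_dist_def by (rule measurable_component_singleton)
  then show ?thesis by (simp cong: measurable_cong_sets)
qed

lemma integral_mu_dist_le_by_coordinate:
  fixes f g :: "('a \<Rightarrow> real) \<Rightarrow> real"
  assumes "finite N" "a \<in> N"
    and "f \<in> borel_measurable (mu_dist N)" "g \<in> borel_measurable (mu_dist N)"
    and "\<And>mu. 0 \<le> f mu \<and> f mu \<le> B" "\<And>mu. 0 \<le> g mu \<and> g mu \<le> B"
    and coord: "\<And>x. (\<integral>\<^sup>+t. ennreal (f (x(a := t))) \<partial>unif01) \<le> (\<integral>\<^sup>+t. ennreal (g (x(a := t))) \<partial>unif01)"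
  shows "integral\<^sup>L (mu_dist N) f \<le> integral\<^sup>L (mu_dist N) g"
proof -
  have "ennreal (integral\<^sup>L (mu_dist N) f) = (\<integral>\<^sup>+mu. ennreal (f mu) \<partial>mu_dist N)"
    using assms(3,5) by (intro nn_integral_eq_integral[symmetric] integrable_mu_dist_bounded) auto
  also have "\<dots> = (\<integral>\<^sup>+x. (\<integral>\<^sup>+t. ennreal (f (x(a := t))) \<partial>unif01) \<partial>PiM (N - {a}) (\<lambda>_. unif01))"
    using assms(1-3) by (intro nn_integral_mu_dist_split) auto
  also have "\<dots> \<le> (\<integral>\<^sup>+x. (\<integral>\<^sup>+t. ennreal (g (x(a := t))) \<partial>unif01) \<partial>PiM (N - {a}) (\<lambda>_. unif01))"
    by (intro nn_integral_mono coord)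
  also have "\<dots> = (\<integral>\<^sup>+mu. ennreal (g mu) \<partial>mu_dist N)"
    using assms(1,2,4) by (intro nn_integral_mu_dist_split[symmetric]) auto
  also have "\<dots> = ennreal (integral\<^sup>L (mu_dist N) g)"
    using assms(4,6) by (intro nn_integral_eq_integral integrable_mu_dist_bounded) auto
  finally show ?thesis
    using assms(6) by (simp add: ennreal_le_iff Bochner_Integration.integral_nonneg)
qed

lemma integral_le_high_fraction:
  fixes h k :: "('a \<Rightarrow> real) \<Rightarrow> real"
  assumes fin: "finite N" and a: "a \<in> N" and "0 \<le> \<gamma>" "\<gamma> \<le> 1"
    and h_meas: "h \<in> borel_measurable (mu_dist N)" and k_meas: "k \<in> borel_measurable (mu_dist N)"
    and h_bounds: "\<And>mu. 0 \<le> h mu \<and> h mu \<le> B" and k_bounds: "\<And>mu. 0 \<le> k mu \<and> k mu \<le> B"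
    and k_indep: "\<And>mu t. k (mu(a := t)) = k mu"
    and h_le: "\<And>mu. mu a \<notin> mu ` (N - {a}) \<Longrightarrow> h mu \<le> (if mu a \<le> \<gamma> then 0 else k mu)"
  shows "integral\<^sup>L (mu_dist N) h \<le> (1 - \<gamma>) * integral\<^sup>L (mu_dist N) k"
proof -
  have "integral\<^sup>L (mu_dist N) h \<le> integral\<^sup>L (mu_dist N) (\<lambda>mu. (1 - \<gamma>) * k mu)"
  proof (rule integral_mu_dist_le_by_coordinate[OF fin a h_meas _ h_bounds])
    show "(\<lambda>mu. (1 - \<gamma>) * k mu) \<in> borel_measurable (mu_dist N)" using k_meas by measurable
    show "0 \<le> (1 - \<gamma>) * k mu \<and> (1 - \<gamma>) * k mu \<le> B" for mu
      using k_bounds[of mu] \<open>\<gamma> \<le> 1\<close> \<open>0 \<le> \<gamma>\<close> mult_left_le_one_le[of "k mu" "1 - \<gamma>"] by auto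
  next
    fix x :: "'a \<Rightarrow> real"
    have "AE t in unif01. t \<notin> x ` (N - {a})" using fin by (intro AE_unif01_notin_finite) auto
    then have "AE t in unif01. ennreal (h (x(a := t))) \<le> ennreal (k x) * indicator {\<gamma><..} t"
    proof (rule AE_mp, intro AE_I2 impI)
      fix t assume "t \<notin> x ` (N - {a})"
      moreover have "(x(a := t)) ` (N - {a}) = x ` (N - {a})" by auto
      ultimately have "h (x(a := t)) \<le> (if t \<le> \<gamma> then 0 else k (x(a := t)))" using h_le[of "x(a := t)"] by simp
      then show "ennreal (h (x(a := t))) \<le> ennreal (k x) * indicator {\<gamma><..} t"
        using k_indep[of x t] h_bounds[of "x(a := t)"] by (auto simp: indicator_def)
    qed
    then have "(\<integral>\<^sup>+t. ennreal (h (x(a := t))) \<partial>unif01) \<le> (\<integral>\<^sup>+t. ennreal (k x) * indicator {\<gamma><..} t \<partial>unif01)"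
      by (rule nn_integral_mono_AE)
    also have "\<dots> = ennreal (k x) * ennreal (1 - \<gamma>)"
      using emeasure_unif01_greaterThan[OF \<open>0 \<le> \<gamma>\<close> \<open>\<gamma> \<le> 1\<close>] by (simp add: nn_integral_cmult_indicator)
    also have "\<dots> = (\<integral>\<^sup>+t. ennreal ((1 - \<gamma>) * k (x(a := t))) \<partial>unif01)"
      using k_bounds[of x] \<open>\<gamma> \<le> 1\<close> prob_space.emeasure_space_1[OF prob_space_unif01]
      by (simp add: k_indep ennreal_mult mult.commute)
    finally show "(\<integral>\<^sup>+t. ennreal (h (x(a := t))) \<partial>unif01)
        \<le> (\<integral>\<^sup>+t. ennreal ((1 - \<gamma>) * k (x(a := t))) \<partial>unif01)" .
  qed
  then show ?thesis by simp
qed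

lemma integral_low_fraction_le:
  fixes m k :: "('a \<Rightarrow> real) \<Rightarrow> real"
  assumes fin: "finite N" and a: "a \<in> N" and "0 \<le> \<gamma>" "\<gamma> \<le> 1"
    and m_meas: "m \<in> borel_measurable (mu_dist N)" and k_meas: "k \<in> borel_measurable (mu_dist N)"
    and m_bounds: "\<And>mu. 0 \<le> m mu \<and> m mu \<le> B" and k_bounds: "\<And>mu. 0 \<le> k mu \<and> k mu \<le> B"
    and k_indep: "\<And>mu t. k (mu(a := t)) = k mu"
    and m_const: "\<And>mu t. t \<le> \<gamma> \<Longrightarrow> m (mu(a := t)) = m (mu(a := 0))"
    and k_le: "\<And>mu. mu a \<le> \<gamma> \<Longrightarrow> k mu \<le> 2 * m mu"
  shows "\<gamma> * integral\<^sup>L (mu_dist N) k \<le> 2 * integral\<^sup>L (mu_dist N) m"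
proof -
  have "integral\<^sup>L (mu_dist N) (\<lambda>mu. \<gamma> * k mu) \<le> integral\<^sup>L (mu_dist N) (\<lambda>mu. 2 * m mu)"
  proof (rule integral_mu_dist_le_by_coordinate[OF fin a, where B = "2 * B"])
    show "(\<lambda>mu. \<gamma> * k mu) \<in> borel_measurable (mu_dist N)" using k_meas by measurable
    show "(\<lambda>mu. 2 * m mu) \<in> borel_measurable (mu_dist N)" using m_meas by measurable
    show "0 \<le> \<gamma> * k mu \<and> \<gamma> * k mu \<le> 2 * B" for mu
      using k_bounds[of mu] \<open>\<gamma> \<le> 1\<close> \<open>0 \<le> \<gamma>\<close> mult_left_le_one_le[of "k mu" \<gamma>] by auto
    show "0 \<le> 2 * m mu \<and> 2 * m mu \<le> 2 * B" for mu using m_bounds[of mu] by auto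
  next
    fix x :: "'a \<Rightarrow> real"
    have "k x \<le> 2 * m (x(a := 0))" using k_le[of "x(a := 0)"] k_indep[of x 0] \<open>0 \<le> \<gamma>\<close> by simp
    then have "\<gamma> * k x \<le> 2 * m (x(a := 0)) * \<gamma>" using \<open>0 \<le> \<gamma>\<close> by (simp add: mult_left_mono mult.commute)
    then have "(\<integral>\<^sup>+t. ennreal (\<gamma> * k (x(a := t))) \<partial>unif01) \<le> ennreal (2 * m (x(a := 0))) * ennreal \<gamma>"
      using prob_space.emeasure_space_1[OF prob_space_unif01] \<open>0 \<le> \<gamma>\<close> m_bounds[of "x(a := 0)"]
      by (simp add: k_indep ennreal_mult[symmetric])
    also have "\<dots> = (\<integral>\<^sup>+t. ennreal (2 * m (x(a := 0))) * indicator {..\<gamma>} t \<partial>unif01)"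
      using emeasure_unif01_atMost[OF \<open>0 \<le> \<gamma>\<close> \<open>\<gamma> \<le> 1\<close>] by (simp add: nn_integral_cmult_indicator)
    also have "\<dots> \<le> (\<integral>\<^sup>+t. ennreal (2 * m (x(a := t))) \<partial>unif01)"
      by (rule nn_integral_mono) (auto simp: indicator_def m_const)
    finally show "(\<integral>\<^sup>+t. ennreal (\<gamma> * k (x(a := t))) \<partial>unif01)
        \<le> (\<integral>\<^sup>+t. ennreal (2 * m (x(a := t))) \<partial>unif01)" .
  qed
  then show ?thesis by simp
qed

lemma combine_low_high_bounds:
  fixes \<gamma> V W :: real
  assumes "0 \<le> \<gamma>" "\<gamma> \<le> 1" "W \<le> 2 * V + (\<Sum>a \<in> A. b a)" "V = (\<Sum>a \<in> A. m a)"
    and "\<And>a. a \<in> A \<Longrightarrow> b a \<le> (1 - \<gamma>) * u a" "\<And>a. a \<in> A \<Longrightarrow> \<gamma> * u a \<le> 2 * m a"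
  shows "\<gamma> * W \<le> 2 * V"
proof -
  have "\<gamma> * b a \<le> (1 - \<gamma>) * (2 * m a)" if "a \<in> A" for a
  proof -
    have "\<gamma> * b a \<le> \<gamma> * ((1 - \<gamma>) * u a)" using assms(5)[OF that] assms(1) by (rule mult_left_mono)
    also have "\<dots> = (1 - \<gamma>) * (\<gamma> * u a)" by simp
    also have "\<dots> \<le> (1 - \<gamma>) * (2 * m a)" using assms(2,6) that by (intro mult_left_mono) auto
    finally show ?thesis .
  qed
  then have "(\<Sum>a \<in> A. \<gamma> * b a) \<le> (\<Sum>a \<in> A. (1 - \<gamma>) * (2 * m a))" by (rule sum_mono)
  also have "\<dots> = (1 - \<gamma>) * (2 * V)" by (simp add: assms(4) sum_distrib_left)
  finally have "(\<Sum>a \<in> A. \<gamma> * b a) \<le> (1 - \<gamma>) * (2 * V)" .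
  moreover have "\<gamma> * W \<le> 2 * \<gamma> * V + (\<Sum>a \<in> A. \<gamma> * b a)"
    using mult_left_mono[OF assms(3,1)] by (simp add: algebra_simps sum_distrib_left)
  ultimately show ?thesis by (simp add: algebra_simps)
qed

text \<open>Hybrid Ranking only compares samples with the threshold and, above it, with each other.\<close>

definition same_order :: "real \<Rightarrow> 'a set \<Rightarrow> ('a \<Rightarrow> real) \<Rightarrow> ('a \<Rightarrow> real) \<Rightarrow> bool" where
  "same_order \<gamma> N mu mu' \<longleftrightarrow> (\<forall>b \<in> N. (mu b \<le> \<gamma>) = (mu' b \<le> \<gamma>)) \<and>
     (\<forall>b \<in> N. \<forall>c \<in> N. \<not> mu b \<le> \<gamma> \<longrightarrow> \<not> mu c \<le> \<gamma> \<longrightarrow> (mu b \<le> mu c) = (mu' b \<le> mu' c))"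

lemma same_order_subset: "same_order \<gamma> N mu mu' \<Longrightarrow> N' \<subseteq> N \<Longrightarrow> same_order \<gamma> N' mu mu'"
  by (auto simp: same_order_def)

definition order_pattern :: "real \<Rightarrow> 'a set \<Rightarrow> ('a \<Rightarrow> real) \<Rightarrow> 'a set \<times> ('a \<times> 'a) set" where
  "order_pattern \<gamma> N mu = ({b \<in> N. mu b \<le> \<gamma>}, {bc \<in> N \<times> N. mu (fst bc) \<le> mu (snd bc)})"

lemma same_order_if_pattern_eq:
  assumes "order_pattern \<gamma> N mu = order_pattern \<gamma> N mu'"
  shows "same_order \<gamma> N mu mu'"
proof -
  from assms have low: "{b \<in> N. mu b \<le> \<gamma>} = {b \<in> N. mu' b \<le> \<gamma>}"
    and le: "{bc \<in> N \<times> N. mu (fst bc) \<le> mu (snd bc)} = {bc \<in> N \<times> N. mu' (fst bc) \<le> mu' (snd bc)}"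
    unfolding order_pattern_def by simp_all
  have "(mu b \<le> \<gamma>) = (mu' b \<le> \<gamma>)" if "b \<in> N" for b
    using that low by blast
  moreover have "(mu b \<le> mu c) = (mu' b \<le> mu' c)" if "b \<in> N" "c \<in> N" for b c
    using that le by (simp add: set_eq_iff) (metis fst_conv snd_conv mem_Sigma_iff)
  ultimately show ?thesis unfolding same_order_def by blast
qed

lemma sets_order_pattern_eq:
  assumes "finite N"
  shows "{mu \<in> space (mu_dist N). order_pattern \<gamma> N mu = (A, B)} \<in> sets (mu_dist N)"
proof -
  have pattern_iff: "order_pattern \<gamma> N mu = (A, B) \<longleftrightarrow>
      (A \<subseteq> N \<and> (\<forall>b \<in> N. (mu b \<le> \<gamma>) = (b \<in> A))) \<and>
      (B \<subseteq> N \<times> N \<and> (\<forall>bc \<in> N \<times> N. (mu (fst bc) \<le> mu (snd bc)) = (bc \<in> B)))" for mu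
    unfolding order_pattern_def by blast
  have iff_const: "{mu \<in> space (mu_dist N). P mu = c} \<in> sets (mu_dist N)"
    if "{mu \<in> space (mu_dist N). P mu} \<in> sets (mu_dist N)" for P c
    using that sets.sets_Collect_neg[OF that] by (cases c) simp_all
  have low: "{mu \<in> space (mu_dist N). (mu b \<le> \<gamma>) = (b \<in> A)} \<in> sets (mu_dist N)" if "b \<in> N" for b
    using that by (intro iff_const borel_measurable_le measurable_component_mu_dist borel_measurable_const)
  have le: "{mu \<in> space (mu_dist N). (mu (fst bc) \<le> mu (snd bc)) = (bc \<in> B)} \<in> sets (mu_dist N)"
    if "bc \<in> N \<times> N" for bc
    using that by (intro iff_const borel_measurable_le measurable_component_mu_dist) auto
  show ?thesis
    unfolding pattern_iff using assms low le
    by (intro sets.sets_Collect_conj sets.sets_Collect_const sets.sets_Collect_finite_All) auto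
qed

lemma borel_measurable_order_invariant:
  fixes h :: "('a \<Rightarrow> real) \<Rightarrow> real"
  assumes fin: "finite N" and h: "\<And>mu mu'. same_order \<gamma> N mu mu' \<Longrightarrow> h mu = h mu'"
  shows "h \<in> borel_measurable (mu_dist N)"
proof -
  let ?P = "Pow N \<times> Pow (N \<times> N)"
  let ?rep = "\<lambda>p. SOME mu. order_pattern \<gamma> N mu = p"
  \<comment> \<open>h takes one value on each of the finitely many measurable pattern classes\<close>
  have h_eq: "h mu = (\<Sum>p \<in> ?P. if order_pattern \<gamma> N mu = p then h (?rep p) else 0)" for mu
  proof -
    have "order_pattern \<gamma> N (?rep (order_pattern \<gamma> N mu)) = order_pattern \<gamma> N mu"
      by (rule someI[of _ mu]) simp
    then have "h (?rep (order_pattern \<gamma> N mu)) = h mu" using h same_order_if_pattern_eq by metis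
    moreover have "order_pattern \<gamma> N mu \<in> ?P" by (auto simp: order_pattern_def)
    ultimately show ?thesis using fin by (simp add: sum.delta')
  qed
  have "(\<lambda>mu. \<Sum>p \<in> ?P. if order_pattern \<gamma> N mu = p then h (?rep p) else 0) \<in> borel_measurable (mu_dist N)"
  proof (intro borel_measurable_sum)
    fix p :: "'a set \<times> ('a \<times> 'a) set"
    obtain A B where p: "p = (A, B)" by (cases p)
    have "(\<lambda>mu. if mu \<in> {mu. order_pattern \<gamma> N mu = p} then h (?rep p) else 0) \<in> borel_measurable (mu_dist N)"
      using sets_order_pattern_eq[OF fin, of \<gamma> A B] unfolding p
      by (intro measurable_If_set) (auto simp: Int_def conj_commute)
    then show "(\<lambda>mu. if order_pattern \<gamma> N mu = p then h (?rep p) else 0) \<in> borel_measurable (mu_dist N)"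
      by simp
  qed
  moreover have "h = (\<lambda>mu. \<Sum>p \<in> ?P. if order_pattern \<gamma> N mu = p then h (?rep p) else 0)"
    using h_eq by (rule ext)
  ultimately show ?thesis by simp
qed

context hr_setting
begin

lemma hr_step_same_order:
  assumes "same_order \<gamma> N mu mu'"
  shows "hr_step \<gamma> E N cls rk mu itm X = hr_step \<gamma> E N cls rk mu' itm X"
proof -
  let ?C = "high_cands N mu' itm X"
  have low: "low_cands N mu itm X = low_cands N mu' itm X"
    and high: "high_cands N mu itm X = ?C"
    using assms by (auto simp: same_order_def low_cands_def high_cands_def)
  have "(mu x \<le> mu y) = (mu' x \<le> mu' y)" if "x \<in> ?C" "y \<in> ?C" for x y
    using assms that by (auto simp: same_order_def high_cands_def)
  then have "(\<lambda>x. x \<in> ?C \<and> (\<forall>y \<in> ?C. mu x \<le> mu y)) = (\<lambda>x. x \<in> ?C \<and> (\<forall>y \<in> ?C. mu' x \<le> mu' y))"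
    by (auto simp: fun_eq_iff)
  then have "lowest_mu ?C mu = lowest_mu ?C mu'" by (simp add: lowest_mu_def)
  then show ?thesis by (simp add: hr_step_eq low high)
qed

lemma tracked_run_same_order:
  assumes "same_order \<gamma> N mu mu'"
  shows "tracked_run N mu S os = tracked_run N mu' S os"
proof (induction os arbitrary: S)
  case (Cons itm os)
  have "class_competes N mu itm X = class_competes N mu' itm X" for X
    using assms by (auto simp: class_competes_def low_cands_def same_order_def)
  then have "tracked_update N mu itm S = tracked_update N mu' itm S"
    by (simp add: tracked_update_def fun_eq_iff)
  then have "tracked_step N mu itm S = tracked_step N mu' itm S"
    by (simp add: tracked_step_def hr_step_same_order[OF assms])
  then show ?case using Cons by simp
qed simp

lemma hr_run_same_order:
  "same_order \<gamma> N mu mu' \<Longrightarrow> hr_run N mu X os = hr_run N mu' X os"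
  by (metis map_fst_tracked_run tracked_run_same_order fst_conv)

lemma borel_measurable_expectation_hybrid_ranking:
  fixes f :: "('i \<times> 'a) set \<Rightarrow> real"
  shows "finite N \<Longrightarrow>
    (\<lambda>mu. measure_pmf.expectation (hybrid_ranking \<gamma> E N cls rk mu items) f) \<in> borel_measurable (mu_dist N)"
  by (intro borel_measurable_order_invariant[where \<gamma> = \<gamma>])
    (simp_all add: hybrid_ranking_eq_hr_run hr_run_same_order)

lemma borel_measurable_matched_prob:
  "finite N \<Longrightarrow> (\<lambda>mu. matched_prob N mu items a) \<in> borel_measurable (mu_dist N)"
  unfolding matched_prob_def
  by (intro borel_measurable_order_invariant[where \<gamma> = \<gamma>]) (simp_all add: hr_run_same_order)

lemma borel_measurable_uncontested_prob_without:
  "finite N \<Longrightarrow> (\<lambda>mu. uncontested_prob_without N mu items a) \<in> borel_measurable (mu_dist N)"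
  unfolding uncontested_prob_without_def
  by (intro borel_measurable_order_invariant[where \<gamma> = \<gamma>])
    (simp_all add: tracked_run_same_order[OF same_order_subset])

lemma borel_measurable_passed_over_prob:
  assumes "finite N" "a \<in> N"
  shows "(\<lambda>mu. passed_over_prob N mu items a) \<in> borel_measurable (mu_dist N)"
proof (rule borel_measurable_order_invariant[where \<gamma> = \<gamma>, OF assms(1)])
  fix mu mu' assume same: "same_order \<gamma> N mu mu'"
  then have "(mu a \<le> \<gamma>) = (mu' a \<le> \<gamma>)" using assms(2) by (auto simp: same_order_def)
  then have "passed_over N mu a = passed_over N mu' a" by (simp add: passed_over_def fun_eq_iff)
  then show "passed_over_prob N mu items a = passed_over_prob N mu' items a"
    by (simp add: passed_over_prob_def tracked_run_same_order[OF same])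
qed

lemma expectation_indicator_bounds:
  fixes P :: "'b \<Rightarrow> bool"
  assumes "finite (set_pmf p)"
  shows "0 \<le> measure_pmf.expectation p (\<lambda>x. if P x then 1 else 0 :: real)
    \<and> measure_pmf.expectation p (\<lambda>x. if P x then 1 else 0 :: real) \<le> 1"
  using assms by (intro conjI expectation_nonneg_pmf expectation_le_const_finite) auto

lemma passed_over_prob_bounds:
  "finite N \<Longrightarrow> 0 \<le> passed_over_prob N mu items a \<and> passed_over_prob N mu items a \<le> 1"
  unfolding passed_over_prob_def by (intro expectation_indicator_bounds finite_set_tracked_run)

lemma uncontested_prob_without_bounds:
  "finite N \<Longrightarrow> 0 \<le> uncontested_prob_without N mu items a \<and> uncontested_prob_without N mu items a \<le> 1"
  unfolding uncontested_prob_without_def by (intro expectation_indicator_bounds finite_set_tracked_run) simp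

lemma matched_prob_bounds:
  "finite N \<Longrightarrow> 0 \<le> matched_prob N mu items a \<and> matched_prob N mu items a \<le> 1"
  unfolding matched_prob_def
  by (auto intro!: expectation_nonneg_pmf expectation_le_const_finite finite_set_hr_run)

lemma integral_passed_over_prob_le:
  assumes "finite N" "a \<in> N" "0 \<le> \<gamma>" "\<gamma> \<le> 1"
  shows "integral\<^sup>L (mu_dist N) (\<lambda>mu. passed_over_prob N mu items a)
       \<le> (1 - \<gamma>) * integral\<^sup>L (mu_dist N) (\<lambda>mu. uncontested_prob_without N mu items a)"
proof (rule integral_le_high_fraction[OF assms, where B = 1])
  show "(\<lambda>mu. passed_over_prob N mu items a) \<in> borel_measurable (mu_dist N)"
    using assms(1,2) by (rule borel_measurable_passed_over_prob)
  show "(\<lambda>mu. uncontested_prob_without N mu items a) \<in> borel_measurable (mu_dist N)"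
    using assms(1) by (rule borel_measurable_uncontested_prob_without)
  show "0 \<le> passed_over_prob N mu items a \<and> passed_over_prob N mu items a \<le> 1" for mu
    using assms(1) by (rule passed_over_prob_bounds)
  show "0 \<le> uncontested_prob_without N mu items a \<and> uncontested_prob_without N mu items a \<le> 1" for mu
    using assms(1) by (rule uncontested_prob_without_bounds)
  show "uncontested_prob_without N (mu(a := t)) items a = uncontested_prob_without N mu items a" for mu t
    unfolding uncontested_prob_without_def
    by (simp add: tracked_run_same_order[of "N - {a}" "mu(a := t)" mu] same_order_def)
  show "passed_over_prob N mu items a
      \<le> (if mu a \<le> \<gamma> then 0 else uncontested_prob_without N mu items a)"
    if "mu a \<notin> mu ` (N - {a})" for mu
    using passed_over_prob_le[OF assms(2) _ that assms(1)]
    by (auto simp: passed_over_prob_def passed_over_def)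
qed

lemma integral_uncontested_prob_le:
  assumes "finite N" "a \<in> N" "0 \<le> \<gamma>" "\<gamma> \<le> 1" "cls a = i" "inj_on rk N" "distinct items"
  shows "\<gamma> * integral\<^sup>L (mu_dist N) (\<lambda>mu. uncontested_prob_without N mu items a)
       \<le> 2 * integral\<^sup>L (mu_dist N) (\<lambda>mu. matched_prob N mu items a)"
proof (rule integral_low_fraction_le[OF assms(1-4), where B = 1])
  show "(\<lambda>mu. matched_prob N mu items a) \<in> borel_measurable (mu_dist N)"
    using assms(1) by (rule borel_measurable_matched_prob)
  show "(\<lambda>mu. uncontested_prob_without N mu items a) \<in> borel_measurable (mu_dist N)"
    using assms(1) by (rule borel_measurable_uncontested_prob_without)
  show "0 \<le> matched_prob N mu items a \<and> matched_prob N mu items a \<le> 1" for mu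
    using assms(1) by (rule matched_prob_bounds)
  show "0 \<le> uncontested_prob_without N mu items a \<and> uncontested_prob_without N mu items a \<le> 1" for mu
    using assms(1) by (rule uncontested_prob_without_bounds)
  show "uncontested_prob_without N (mu(a := t)) items a = uncontested_prob_without N mu items a" for mu t
    unfolding uncontested_prob_without_def
    by (simp add: tracked_run_same_order[of "N - {a}" "mu(a := t)" mu] same_order_def)
  show "matched_prob N (mu(a := t)) items a = matched_prob N (mu(a := 0)) items a" if "t \<le> \<gamma>" for mu t
    unfolding matched_prob_def using that assms(3)
    by (simp add: hr_run_same_order[of N "mu(a := t)" "mu(a := 0)"] same_order_def)
  show "uncontested_prob_without N mu items a \<le> 2 * matched_prob N mu items a" if "mu a \<le> \<gamma>" for mu
    using assms that by (intro uncontested_prob_le_twice_matched) auto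
qed

lemma integral_class_value_eq_sum:
  assumes "finite N" "distinct items"
  shows "integrable (mu_dist N)
      (\<lambda>mu. measure_pmf.expectation (hybrid_ranking \<gamma> E N cls rk mu items) (class_value N cls i))"
    and "integral\<^sup>L (mu_dist N)
      (\<lambda>mu. measure_pmf.expectation (hybrid_ranking \<gamma> E N cls rk mu items) (class_value N cls i))
      = (\<Sum>a \<in> {a \<in> N. cls a = i}. integral\<^sup>L (mu_dist N) (\<lambda>mu. matched_prob N mu items a))"
proof -
  have int: "integrable (mu_dist N) (\<lambda>mu. matched_prob N mu items a)" for a
    using assms(1) matched_prob_bounds
    by (intro integrable_mu_dist_bounded[where B = 1] borel_measurable_matched_prob)
  show "integrable (mu_dist N)
      (\<lambda>mu. measure_pmf.expectation (hybrid_ranking \<gamma> E N cls rk mu items) (class_value N cls i))"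
    unfolding expectation_class_value_eq_sum[OF assms] using int by (rule Bochner_Integration.integrable_sum)
  show "integral\<^sup>L (mu_dist N)
      (\<lambda>mu. measure_pmf.expectation (hybrid_ranking \<gamma> E N cls rk mu items) (class_value N cls i))
      = (\<Sum>a \<in> {a \<in> N. cls a = i}. integral\<^sup>L (mu_dist N) (\<lambda>mu. matched_prob N mu items a))"
    unfolding expectation_class_value_eq_sum[OF assms] using int by (rule Bochner_Integration.integral_sum)
qed

lemma integral_frac_value_le:
  fixes M :: "'i set"
  assumes "finite M" "finite N" "E \<subseteq> M \<times> N" "distinct items" "set items = M"
  shows "hr_expect \<gamma> E N cls rk items (\<lambda>X. frac_value M N E cls i (class_items N cls j X))
       \<le> 2 * hr_expect \<gamma> E N cls rk items (class_value N cls i)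
         + (\<Sum>a \<in> {a \<in> N. cls a = i}. integral\<^sup>L (mu_dist N) (\<lambda>mu. passed_over_prob N mu items a))"
proof -
  let ?I = "integral\<^sup>L (mu_dist N)" and ?Ni = "{a \<in> N. cls a = i}"
  let ?V = "\<lambda>mu. measure_pmf.expectation (hybrid_ranking \<gamma> E N cls rk mu items) (class_value N cls i)"
  let ?W = "\<lambda>mu. measure_pmf.expectation (hybrid_ranking \<gamma> E N cls rk mu items)
                  (\<lambda>X. frac_value M N E cls i (class_items N cls j X))"
  have int_passed: "integrable (mu_dist N) (\<lambda>mu. passed_over_prob N mu items a)" if "a \<in> N" for a
    using assms(2) that passed_over_prob_bounds
    by (intro integrable_mu_dist_bounded[where B = 1] borel_measurable_passed_over_prob)
  have int_V: "integrable (mu_dist N) ?V" using assms(2,4) by (rule integral_class_value_eq_sum)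
  have "0 \<le> frac_value M N E cls i (class_items N cls j X)
      \<and> frac_value M N E cls i (class_items N cls j X) \<le> card N" for X
    using frac_value_bounds[OF assms(1-3)] by (simp add: class_items_def)
  then have "0 \<le> ?W mu \<and> ?W mu \<le> card N" for mu
    using assms(2) hybrid_ranking_eq_hr_run[of N mu items]
    by (auto intro!: expectation_nonneg_pmf expectation_le_const_finite finite_set_hr_run)
  then have int_W: "integrable (mu_dist N) ?W"
    using assms(2) by (intro integrable_mu_dist_bounded borel_measurable_expectation_hybrid_ranking)
  have "?I ?W \<le> ?I (\<lambda>mu. 2 * ?V mu + (\<Sum>a \<in> ?Ni. passed_over_prob N mu items a))"
    using int_W int_V int_passed expectation_frac_value_le[OF assms]
    by (intro integral_mono Bochner_Integration.integrable_add integrable_mult_right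
        Bochner_Integration.integrable_sum) auto
  also have "\<dots> = ?I (\<lambda>mu. 2 * ?V mu) + ?I (\<lambda>mu. \<Sum>a \<in> ?Ni. passed_over_prob N mu items a)"
    using int_V int_passed
    by (intro Bochner_Integration.integral_add integrable_mult_right Bochner_Integration.integrable_sum)
      auto
  also have "?I (\<lambda>mu. \<Sum>a \<in> ?Ni. passed_over_prob N mu items a)
      = (\<Sum>a \<in> ?Ni. ?I (\<lambda>mu. passed_over_prob N mu items a))"
    using int_passed by (intro Bochner_Integration.integral_sum) auto
  finally show ?thesis by (simp add: hr_expect_def)
qed

lemma hr_expect_frac_value_le:
  fixes M :: "'i set"
  assumes "0 \<le> \<gamma>" "\<gamma> \<le> 1" "finite M" "finite N" "E \<subseteq> M \<times> N" "inj_on rk N"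
    and "distinct items" "set items = M"
  shows "\<gamma> * hr_expect \<gamma> E N cls rk items (\<lambda>X. frac_value M N E cls i (class_items N cls j X))
       \<le> 2 * hr_expect \<gamma> E N cls rk items (class_value N cls i)"
  using assms(1,2) integral_frac_value_le[OF assms(3-5,7,8)]
proof (rule combine_low_high_bounds)
  let ?I = "integral\<^sup>L (mu_dist N)"
  show "hr_expect \<gamma> E N cls rk items (class_value N cls i)
      = (\<Sum>a \<in> {a \<in> N. cls a = i}. ?I (\<lambda>mu. matched_prob N mu items a))"
    unfolding hr_expect_def using assms(4,7) by (rule integral_class_value_eq_sum)
  show "?I (\<lambda>mu. passed_over_prob N mu items a)
      \<le> (1 - \<gamma>) * ?I (\<lambda>mu. uncontested_prob_without N mu items a)" if "a \<in> {a \<in> N. cls a = i}" for a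
    using that assms(1,2,4) by (intro integral_passed_over_prob_le) auto
  show "\<gamma> * ?I (\<lambda>mu. uncontested_prob_without N mu items a) \<le> 2 * ?I (\<lambda>mu. matched_prob N mu items a)"
    if "a \<in> {a \<in> N. cls a = i}" for a
    using that assms(1,2,4,6,7) by (intro integral_uncontested_prob_le) auto
qed

end

theorem lemma4:
  fixes \<gamma> :: real and M :: "'i set" and N :: "'a set" and E :: "('i \<times> 'a) set"
    and k :: nat and cls :: "'a \<Rightarrow> nat" and rk :: "'a \<Rightarrow> nat" and items :: "'i list"
  assumes "0 \<le> \<gamma>" and "\<gamma> \<le> 1"
    and "finite M" and "finite N" and "E \<subseteq> M \<times> N"
    and "\<forall>a \<in> N. cls a < k"
    and "inj_on rk N"
    and "distinct items" and "set items = M"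
    and "i < k" and "j < k"
  shows "hr_expect \<gamma> E N cls rk items (class_value N cls i)
           \<ge> \<gamma> / 2 * hr_expect \<gamma> E N cls rk items
                        (\<lambda>X. frac_value M N E cls i (class_items N cls j X))"
  using hr_setting.hr_expect_frac_value_le[where cls = cls and i = i and j = j, OF assms(1-5,7-9)]
  by (simp add: field_simps)

end
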